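(* Consider a quantum spin system on the $\nu$-dimensional hypercubic lattice with $N$ sites and a finite-dimensional single-site Hilbert space. For $i=0,\dots,m-1$ let $\hat X_{N(i)}=\sum_j\gamma_j(\hat o_{(i)})$, where $\gamma_j$ is the lattice translation by $j$ and $\hat o_{(i)}$ is an $N$-independent self-adjoint local observable, and let $\hat x_{N(i)}=\hat X_{N(i)}/N$. Let $\check{\boldsymbol X}_N=(\check X_{N(0)},\dots,\check X_{N(m-1)})$ be self-adjoint operators with $\lim_{N\to\infty}\|\hat X_{N(i)}-\check X_{N(i)}\|=0$ and $[\check X_{N(i)},\check X_{N(j)}]=0$ for all $i,j$, and $\check x_{N(i)}=\check X_{N(i)}/N$. Let $\eta$ be an $N$-independent polynomial with real coefficients in $m$ noncommutative indeterminates such that $\eta(\hat{\boldsymbol x}_N)$ is self-adjoint for all $N$. For $\dot{\ }\in\{\hat{\ },\check{\ }\}$ define $\psi_N^{\dot\eta}=-\frac1N\log\mathrm{Tr}[e^{-N\eta(\dot{\boldsymbol x}_N)}]$. If $\psi_N^{\hat\eta}$ and $\psi_N^{\check\eta}$ both converge as $N\to\infty$, then $\lim_{N\to\infty}\psi_N^{\hat\eta}=\lim_{N\to\infty}\psi_N^{\check\eta}$.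
   Context: $\|\cdot\|$ is the operator norm. $\psi_N^{\dot\eta}$ is the (finite-size) thermodynamic function of the squeezed ensemble $e^{-N\eta(\dot{\boldsymbol x}_N)}/\mathrm{Tr}[e^{-N\eta(\dot{\boldsymbol x}_N)}]$. *)

theory Defs
  imports "HOL-Analysis.Analysis" "Jordan_Normal_Form.Matrix"
begin

definition selfadjoint :: "nat \<Rightarrow> complex mat \<Rightarrow> bool" where
  "selfadjoint n A \<longleftrightarrow> A \<in> carrier_mat n n \<and>
     (\<forall>i<n. \<forall>j<n. A $$ (i, j) = cnj (A $$ (j, i)))"

definition mtrace :: "complex mat \<Rightarrow> complex" where
  "mtrace A = (\<Sum>i<dim_row A. A $$ (i, i))"

definition mexp :: "complex mat \<Rightarrow> complex mat" where
  "mexp A = mat (dim_row A) (dim_col A)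
     (\<lambda>(i, j). (\<Sum>k. (A ^\<^sub>m k) $$ (i, j) / of_nat (fact k)))"

definition vnorm :: "complex vec \<Rightarrow> real" where
  "vnorm v = sqrt (\<Sum>i<dim_vec v. (cmod (v $ i))\<^sup>2)"

definition opnorm :: "complex mat \<Rightarrow> real" where
  "opnorm A = Sup {vnorm (A *\<^sub>v v) | v. v \<in> carrier_vec (dim_col A) \<and> vnorm v \<le> 1}"

text \<open>Lattice: the periodic hypercube \<open>{0..<L}^nu\<close>, N = L^nu sites; site k has
  coordinates \<open>coord L k a\<close> (a < nu), i.e. its base-L digits.\<close>

definition coord :: "nat \<Rightarrow> nat \<Rightarrow> nat \<Rightarrow> nat" where
  "coord K k a = (k div K ^ a) mod K"

definition site_of :: "nat \<Rightarrow> nat \<Rightarrow> (nat \<Rightarrow> nat) \<Rightarrow> nat" where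
  "site_of nu L x = (\<Sum>a<nu. (x a mod L) * L ^ a)"

text \<open>Basis states of the N-site Hilbert space (C^d)^{\<otimes>N} are indexed by
  c < d^N; the state of site k is the k-th base-d digit.\<close>
definition digit :: "nat \<Rightarrow> nat \<Rightarrow> nat \<Rightarrow> nat" where
  "digit d c k = (c div d ^ k) mod d"

text \<open>Site of the translate by lattice vector (site) j of the box site b of the
  box \<open>{0..<r}^nu\<close>.\<close>
definition shift :: "nat \<Rightarrow> nat \<Rightarrow> nat \<Rightarrow> nat \<Rightarrow> nat \<Rightarrow> nat" where
  "shift nu L r j b = site_of nu L (\<lambda>a. coord L j a + coord r b a)"

text \<open>\<open>gamma_j(o)\<close>: the local observable o acting on the box \<open>{0..<r}^nu\<close>
  (matrix of size d^(r^nu)), translated by j and embedded into the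
  N-site system (tensored with the identity elsewhere).\<close>
definition translate_obs ::
  "nat \<Rightarrow> nat \<Rightarrow> nat \<Rightarrow> nat \<Rightarrow> complex mat \<Rightarrow> nat \<Rightarrow> complex mat" where
  "translate_obs nu d r L ob j =
     (let N = L ^ nu; n = d ^ N;
          reg = shift nu L r j ` {..<r ^ nu};
          enc = (\<lambda>c. \<Sum>b<r ^ nu. digit d c (shift nu L r j b) * d ^ b)
      in mat n n (\<lambda>(c, c').
           if (\<forall>k<N. k \<notin> reg \<longrightarrow> digit d c k = digit d c' k)
           then ob $$ (enc c, enc c') else 0))"

definition Xhat :: "nat \<Rightarrow> nat \<Rightarrow> nat \<Rightarrow> nat \<Rightarrow> complex mat \<Rightarrow> complex mat" where
  "Xhat nu d r L ob =
     mat (d ^ (L ^ nu)) (d ^ (L ^ nu))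
       (\<lambda>ij. \<Sum>j<L ^ nu. translate_obs nu d r L ob j $$ ij)"

text \<open>Noncommutative polynomials with real coefficients: coefficient function
  on words (lists of indeterminate indices), finitely supported.\<close>
definition word_prod :: "nat \<Rightarrow> (nat \<Rightarrow> complex mat) \<Rightarrow> nat list \<Rightarrow> complex mat" where
  "word_prod n x w = foldr (\<lambda>i A. x i * A) w (1\<^sub>m n)"

definition nc_eval :: "nat \<Rightarrow> (nat list \<Rightarrow> real) \<Rightarrow> (nat \<Rightarrow> complex mat) \<Rightarrow> complex mat" where
  "nc_eval n eta x = mat n n (\<lambda>ij. \<Sum>w\<in>{w. eta w \<noteq> 0}.
      complex_of_real (eta w) * word_prod n x w $$ ij)"

definition psi :: "nat \<Rightarrow> nat \<Rightarrow> (nat list \<Rightarrow> real) \<Rightarrow> (nat \<Rightarrow> complex mat) \<Rightarrow> real" where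
  "psi n N eta X =
     - ln (Re (mtrace (mexp ((- of_nat N) \<cdot>\<^sub>m
          nc_eval n eta (\<lambda>i. (1 / of_nat N) \<cdot>\<^sub>m X i))))) / real N"

end

theory Submission
  imports Defs "Jordan_Normal_Form.Spectral_Radius" "Jordan_Normal_Form.Schur_Decomposition"
begin

(* The rescaled observables Xhat_N / N are uniformly bounded in operator norm (each translate is
   bounded by the Schur test), and by hypothesis (Xhat_N - Xcheck_N) / N -> 0.  A noncommutative
   polynomial is Lipschitz on bounded sets, so ||eta(xhat_N) - eta(xcheck_N)|| -> 0.  Finally
   A |-> ln Tr exp A is 1-Lipschitz for the operator norm on self-adjoint matrices: writing
   A = U diag(a) U^* and B = V diag(b) V^*, each a_i is at most ||A - B|| plus the average of the
   b_j with the doubly stochastic weights |(U^* V)_ij|^2, and Jensen's inequality for exp gives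
   Tr exp A <= exp ||A - B|| Tr exp B. *)

section \<open>Euclidean and operator norms\<close>

lemma vnorm_eq_L2_set:
  fixes v :: "complex vec"
  shows "vnorm v = L2_set (\<lambda>i. cmod (v $ i)) {..<dim_vec v}"
  unfolding vnorm_def L2_set_def by simp

lemma vnorm_nonneg: "0 \<le> vnorm v"
  unfolding vnorm_def by (simp add: sum_nonneg)

lemma vnorm_zero_vec [simp]: "vnorm (0\<^sub>v n) = 0"
  by (simp add: vnorm_def)

lemma vnorm_eq_0_iff:
  fixes v :: "complex vec"
  shows "vnorm v = 0 \<longleftrightarrow> (\<forall>i<dim_vec v. v $ i = 0)"
  unfolding vnorm_def by (auto simp: sum_nonneg_eq_0_iff)

lemma vnorm_le_L2_set:
  fixes w :: "complex vec"
  assumes "dim_vec w = n" "\<And>i. i < n \<Longrightarrow> cmod (w $ i) \<le> b i"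
  shows "vnorm w \<le> L2_set b {..<n}"
  unfolding vnorm_eq_L2_set using assms by (auto intro!: L2_set_mono)

lemma vnorm_add:
  fixes u v :: "complex vec"
  assumes "dim_vec u = dim_vec v"
  shows "vnorm (u + v) \<le> vnorm u + vnorm v"
proof -
  have "vnorm (u + v) \<le> L2_set (\<lambda>i. cmod (u $ i) + cmod (v $ i)) {..<dim_vec v}"
    by (rule vnorm_le_L2_set) (use assms in \<open>auto intro: norm_triangle_ineq\<close>)
  also have "\<dots> \<le> vnorm u + vnorm v"
    unfolding vnorm_eq_L2_set using assms by (simp add: L2_set_triangle_ineq)
  finally show ?thesis .
qed

lemma vnorm_diff:
  fixes u v :: "complex vec"
  assumes "dim_vec u = dim_vec v"
  shows "vnorm (u - v) \<le> vnorm u + vnorm v"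
proof -
  have "vnorm (u - v) \<le> L2_set (\<lambda>i. cmod (u $ i) + cmod (v $ i)) {..<dim_vec v}"
    by (rule vnorm_le_L2_set) (use assms in \<open>auto intro: norm_triangle_ineq4\<close>)
  also have "\<dots> \<le> vnorm u + vnorm v"
    unfolding vnorm_eq_L2_set using assms by (simp add: L2_set_triangle_ineq)
  finally show ?thesis .
qed

lemma vnorm_smult:
  fixes v :: "complex vec"
  shows "vnorm (c \<cdot>\<^sub>v v) = cmod c * vnorm v"
proof -
  have "vnorm (c \<cdot>\<^sub>v v) = L2_set (\<lambda>i. cmod c * cmod (v $ i)) {..<dim_vec v}"
    unfolding vnorm_eq_L2_set by (intro L2_set_cong) (auto simp: norm_mult)
  also have "\<dots> = cmod c * vnorm v"
    unfolding vnorm_eq_L2_set by (simp add: L2_set_right_distrib)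
  finally show ?thesis .
qed

lemma cmod_sum_mult_le_vnorm:
  fixes u v :: "complex vec"
  assumes "dim_vec u = n" "dim_vec v = n"
  shows "cmod (\<Sum>i<n. u $ i * v $ i) \<le> vnorm u * vnorm v"
proof -
  have "cmod (\<Sum>i<n. u $ i * v $ i) \<le> (\<Sum>i<n. \<bar>cmod (u $ i)\<bar> * \<bar>cmod (v $ i)\<bar>)"
    by (rule order_trans[OF norm_sum]) (simp add: norm_mult)
  also have "\<dots> \<le> vnorm u * vnorm v"
    unfolding vnorm_eq_L2_set
    using assms L2_set_mult_ineq[of "\<lambda>i. cmod (u $ i)" "\<lambda>i. cmod (v $ i)" "{..<n}"] by simp
  finally show ?thesis .
qed

lemma index_mult_mat_vec_sum:
  assumes "i < dim_row A" "dim_vec v = dim_col A"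
  shows "(A *\<^sub>v v) $ i = (\<Sum>j<dim_col A. A $$ (i, j) * v $ j)"
  using assms by (simp add: scalar_prod_def atLeast0LessThan)

lemma index_mult_mat_sum:
  assumes "A \<in> carrier_mat n k" "B \<in> carrier_mat k l" "i < n" "j < l"
  shows "(A * B) $$ (i, j) = (\<Sum>t<k. A $$ (i, t) * B $$ (t, j))"
  using assms by (auto simp: scalar_prod_def atLeast0LessThan intro!: sum.cong)

definition frobenius_norm :: "complex mat \<Rightarrow> real" where
  "frobenius_norm A = L2_set (\<lambda>i. L2_set (\<lambda>j. cmod (A $$ (i, j))) {..<dim_col A}) {..<dim_row A}"

lemma vnorm_mult_mat_vec_le_frobenius:
  assumes "dim_vec v = dim_col A"
  shows "vnorm (A *\<^sub>v v) \<le> frobenius_norm A * vnorm v"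
proof -
  have "vnorm (A *\<^sub>v v)
      \<le> L2_set (\<lambda>i. L2_set (\<lambda>j. cmod (A $$ (i, j))) {..<dim_col A} * vnorm v) {..<dim_row A}"
  proof (rule vnorm_le_L2_set)
    fix i assume i: "i < dim_row A"
    have "cmod ((A *\<^sub>v v) $ i) = cmod (\<Sum>j<dim_col A. row A i $ j * v $ j)"
      by (subst index_mult_mat_vec_sum) (use i assms in auto)
    also have "\<dots> \<le> vnorm (row A i) * vnorm v"
      by (rule cmod_sum_mult_le_vnorm) (use assms in auto)
    also have "vnorm (row A i) = L2_set (\<lambda>j. cmod (A $$ (i, j))) {..<dim_col A}"
      unfolding vnorm_eq_L2_set using i by (intro L2_set_cong) auto
    finally show "cmod ((A *\<^sub>v v) $ i) \<le> L2_set (\<lambda>j. cmod (A $$ (i, j))) {..<dim_col A} * vnorm v" .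
  qed simp
  also have "\<dots> = frobenius_norm A * vnorm v"
    unfolding frobenius_norm_def by (simp add: L2_set_left_distrib[symmetric] vnorm_nonneg)
  finally show ?thesis .
qed

lemma zero_in_opnorm_set: "0 \<in> {vnorm (A *\<^sub>v v) | v. v \<in> carrier_vec (dim_col A) \<and> vnorm v \<le> 1}"
proof -
  have "A *\<^sub>v 0\<^sub>v (dim_col A) = 0\<^sub>v (dim_row A)"
    by (intro eq_vecI) (auto simp: scalar_prod_def)
  then show ?thesis by (auto intro!: exI[of _ "0\<^sub>v (dim_col A)"])
qed

lemma bdd_above_opnorm_set:
  "bdd_above {vnorm (A *\<^sub>v v) | v. v \<in> carrier_vec (dim_col A) \<and> vnorm v \<le> 1}"
proof (rule bdd_aboveI)
  fix x assume "x \<in> {vnorm (A *\<^sub>v v) | v. v \<in> carrier_vec (dim_col A) \<and> vnorm v \<le> 1}"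
  then obtain v where v: "x = vnorm (A *\<^sub>v v)" "v \<in> carrier_vec (dim_col A)" "vnorm v \<le> 1"
    by auto
  have "x \<le> frobenius_norm A * vnorm v"
    using v vnorm_mult_mat_vec_le_frobenius by auto
  also have "\<dots> \<le> frobenius_norm A"
    using v mult_left_mono[of "vnorm v" 1 "frobenius_norm A"]
    by (simp add: frobenius_norm_def L2_set_nonneg)
  finally show "x \<le> frobenius_norm A" .
qed

lemma opnorm_nonneg: "0 \<le> opnorm A"
  unfolding opnorm_def by (rule cSup_upper[OF zero_in_opnorm_set bdd_above_opnorm_set])

lemma vnorm_mult_mat_vec_le:
  assumes v: "dim_vec v = dim_col A"
  shows "vnorm (A *\<^sub>v v) \<le> opnorm A * vnorm v"
proof (cases "vnorm v = 0")
  case True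
  then have "vnorm (A *\<^sub>v v) = 0"
    using v by (auto simp: vnorm_eq_0_iff scalar_prod_def)
  then show ?thesis using True by simp
next
  case False
  then have pos: "vnorm v > 0" using vnorm_nonneg[of v] by linarith
  define w where "w = complex_of_real (1 / vnorm v) \<cdot>\<^sub>v v"
  have vc: "v \<in> carrier_vec (dim_col A)" using v by (rule carrier_vecI)
  have "A *\<^sub>v w = complex_of_real (1 / vnorm v) \<cdot>\<^sub>v (A *\<^sub>v v)"
    unfolding w_def by (rule mult_mat_vec[OF carrier_mat_triv vc])
  then have Aw: "vnorm (A *\<^sub>v w) = vnorm (A *\<^sub>v v) / vnorm v"
    using pos by (simp add: vnorm_smult norm_divide)
  have "vnorm (A *\<^sub>v w) \<le> opnorm A"
    unfolding opnorm_def
    by (rule cSup_upper[OF _ bdd_above_opnorm_set])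
       (use vc pos in \<open>auto simp: w_def vnorm_smult norm_divide\<close>)
  then show ?thesis using pos Aw by (simp add: divide_le_eq)
qed

lemma opnorm_leI:
  assumes "0 \<le> K" and "\<And>v. dim_vec v = dim_col A \<Longrightarrow> vnorm (A *\<^sub>v v) \<le> K * vnorm v"
  shows "opnorm A \<le> K"
  unfolding opnorm_def
proof (rule cSup_least)
  show "{vnorm (A *\<^sub>v v) | v. v \<in> carrier_vec (dim_col A) \<and> vnorm v \<le> 1} \<noteq> {}"
    using zero_in_opnorm_set by blast
  fix x assume "x \<in> {vnorm (A *\<^sub>v v) | v. v \<in> carrier_vec (dim_col A) \<and> vnorm v \<le> 1}"
  then obtain v where v: "x = vnorm (A *\<^sub>v v)" "v \<in> carrier_vec (dim_col A)" "vnorm v \<le> 1"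
    by auto
  have "x \<le> K * vnorm v" using v assms(2) by auto
  also have "\<dots> \<le> K" using assms(1) v mult_left_mono[of "vnorm v" 1 K] by simp
  finally show "x \<le> K" .
qed

lemma opnorm_add:
  assumes A: "A \<in> carrier_mat n k" and B: "B \<in> carrier_mat n k"
  shows "opnorm (A + B) \<le> opnorm A + opnorm B"
proof (rule opnorm_leI)
  show "0 \<le> opnorm A + opnorm B" using opnorm_nonneg[of A] opnorm_nonneg[of B] by simp
  fix v :: "complex vec" assume "dim_vec v = dim_col (A + B)"
  then have v: "v \<in> carrier_vec k" using B by (auto intro: carrier_vecI)
  have "vnorm ((A + B) *\<^sub>v v) \<le> vnorm (A *\<^sub>v v) + vnorm (B *\<^sub>v v)"
    using A B v by (simp add: add_mult_distrib_mat_vec vnorm_add)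
  also have "\<dots> \<le> opnorm A * vnorm v + opnorm B * vnorm v"
    using A B v by (intro add_mono vnorm_mult_mat_vec_le) auto
  finally show "vnorm ((A + B) *\<^sub>v v) \<le> (opnorm A + opnorm B) * vnorm v"
    by (simp add: algebra_simps)
qed

lemma opnorm_diff:
  assumes A: "A \<in> carrier_mat n k" and B: "B \<in> carrier_mat n k"
  shows "opnorm (A - B) \<le> opnorm A + opnorm B"
proof (rule opnorm_leI)
  show "0 \<le> opnorm A + opnorm B" using opnorm_nonneg[of A] opnorm_nonneg[of B] by simp
  fix v :: "complex vec" assume "dim_vec v = dim_col (A - B)"
  then have v: "v \<in> carrier_vec k" using B by (auto intro: carrier_vecI)
  have "vnorm ((A - B) *\<^sub>v v) \<le> vnorm (A *\<^sub>v v) + vnorm (B *\<^sub>v v)"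
    using A B v by (simp add: minus_mult_distrib_mat_vec vnorm_diff)
  also have "\<dots> \<le> opnorm A * vnorm v + opnorm B * vnorm v"
    using A B v by (intro add_mono vnorm_mult_mat_vec_le) auto
  finally show "vnorm ((A - B) *\<^sub>v v) \<le> (opnorm A + opnorm B) * vnorm v"
    by (simp add: algebra_simps)
qed

lemma opnorm_mult:
  assumes A: "A \<in> carrier_mat n k" and B: "B \<in> carrier_mat k l"
  shows "opnorm (A * B) \<le> opnorm A * opnorm B"
proof (rule opnorm_leI)
  show "0 \<le> opnorm A * opnorm B" using opnorm_nonneg[of A] opnorm_nonneg[of B] by simp
  fix v :: "complex vec" assume "dim_vec v = dim_col (A * B)"
  then have v: "v \<in> carrier_vec l" using B by (auto intro: carrier_vecI)
  have "vnorm ((A * B) *\<^sub>v v) \<le> opnorm A * vnorm (B *\<^sub>v v)"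
    using A B v by (simp add: assoc_mult_mat_vec vnorm_mult_mat_vec_le)
  also have "\<dots> \<le> opnorm A * (opnorm B * vnorm v)"
    using B v by (intro mult_left_mono vnorm_mult_mat_vec_le opnorm_nonneg) auto
  finally show "vnorm ((A * B) *\<^sub>v v) \<le> (opnorm A * opnorm B) * vnorm v"
    by (simp add: algebra_simps)
qed

lemma opnorm_smult: "opnorm (c \<cdot>\<^sub>m A) \<le> cmod c * opnorm A"
proof (rule opnorm_leI)
  show "0 \<le> cmod c * opnorm A" using opnorm_nonneg[of A] by simp
  fix v :: "complex vec" assume v: "dim_vec v = dim_col (c \<cdot>\<^sub>m A)"
  have "(c \<cdot>\<^sub>m A) *\<^sub>v v = c \<cdot>\<^sub>v (A *\<^sub>v v)"
    using v by (intro eq_vecI) (simp_all add: scalar_prod_def sum_distrib_left mult.assoc)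
  then have "vnorm ((c \<cdot>\<^sub>m A) *\<^sub>v v) = cmod c * vnorm (A *\<^sub>v v)"
    by (simp add: vnorm_smult)
  also have "\<dots> \<le> cmod c * (opnorm A * vnorm v)"
    using v by (intro mult_left_mono vnorm_mult_mat_vec_le) auto
  finally show "vnorm ((c \<cdot>\<^sub>m A) *\<^sub>v v) \<le> cmod c * opnorm A * vnorm v"
    by (simp add: algebra_simps)
qed

lemma opnorm_smult_diff:
  assumes "A \<in> carrier_mat n k" "B \<in> carrier_mat n k"
  shows "opnorm (c \<cdot>\<^sub>m A - c \<cdot>\<^sub>m B) \<le> cmod c * opnorm (A - B)"
proof -
  have "c \<cdot>\<^sub>m A - c \<cdot>\<^sub>m B = c \<cdot>\<^sub>m (A - B)"
    using assms by (intro eq_matI) (auto simp: right_diff_distrib)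
  then show ?thesis by (simp add: opnorm_smult)
qed

lemma opnorm_le_opnorm_plus_diff:
  assumes "A \<in> carrier_mat n k" "B \<in> carrier_mat n k"
  shows "opnorm B \<le> opnorm A + opnorm (A - B)"
proof -
  have AB: "A - B \<in> carrier_mat n k" by (rule minus_carrier_mat[OF assms(2)])
  have "B = A - (A - B)" using assms by (intro eq_matI) auto
  then have "opnorm B = opnorm (A - (A - B))" by (rule arg_cong)
  then show ?thesis using opnorm_diff[OF assms(1) AB] by linarith
qed

lemma opnorm_minus_commute:
  assumes "A \<in> carrier_mat n k" "B \<in> carrier_mat n k"
  shows "opnorm (B - A) = opnorm (A - B)"
proof -
  have *: "opnorm (Y - X) \<le> opnorm (X - Y)"
    if "X \<in> carrier_mat n k" "Y \<in> carrier_mat n k" for X Y :: "complex mat"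
  proof -
    have "Y - X = (-1) \<cdot>\<^sub>m (X - Y)" using that by (intro eq_matI) auto
    then show ?thesis using opnorm_smult[of "-1" "X - Y"] by simp
  qed
  show ?thesis using *[OF assms] *[OF assms(2,1)] by linarith
qed

lemma opnorm_one_mat: "opnorm (1\<^sub>m n) \<le> 1"
  by (rule opnorm_leI) auto

lemma opnorm_zero_mat: "opnorm (0\<^sub>m n k) = 0"
proof -
  have "opnorm (0\<^sub>m n k) \<le> 0"
  proof (rule opnorm_leI)
    fix v :: "complex vec" assume "dim_vec v = dim_col (0\<^sub>m n k :: complex mat)"
    then have "0\<^sub>m n k *\<^sub>v v = 0\<^sub>v n" by (intro eq_vecI) (auto simp: scalar_prod_def)
    then show "vnorm (0\<^sub>m n k *\<^sub>v v) \<le> 0 * vnorm v" by simp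
  qed simp
  then show ?thesis using opnorm_nonneg[of "0\<^sub>m n k"] by linarith
qed

lemma cmod_quadratic_form_le_opnorm:
  assumes C: "C \<in> carrier_mat n n" and u: "dim_vec u = n" "vnorm u = 1"
  shows "cmod (\<Sum>i<n. cnj (u $ i) * (C *\<^sub>v u) $ i) \<le> opnorm C"
proof -
  let ?cu = "vec n (\<lambda>i. cnj (u $ i))"
  have "cmod (\<Sum>i<n. ?cu $ i * (C *\<^sub>v u) $ i) \<le> vnorm ?cu * vnorm (C *\<^sub>v u)"
    by (rule cmod_sum_mult_le_vnorm) (use C in simp_all)
  also have "vnorm ?cu = 1" using u by (simp add: vnorm_def)
  also have "vnorm (C *\<^sub>v u) \<le> opnorm C * vnorm u" using C u by (intro vnorm_mult_mat_vec_le) simp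
  finally show ?thesis using u by simp
qed

lemma weighted_Cauchy_Schwarz_sum:
  fixes a x :: "nat \<Rightarrow> real"
  assumes "\<And>j. 0 \<le> a j"
  shows "(\<Sum>j<n. a j * x j)\<^sup>2 \<le> (\<Sum>j<n. a j) * (\<Sum>j<n. a j * (x j)\<^sup>2)"
proof -
  have "(\<Sum>j<n. a j * x j) = (\<Sum>j<n. sqrt (a j) * (sqrt (a j) * x j))"
    using assms by (intro sum.cong) (auto simp: mult.assoc[symmetric])
  also have "(\<dots>)\<^sup>2 \<le> (\<Sum>j<n. (sqrt (a j))\<^sup>2) * (\<Sum>j<n. (sqrt (a j) * x j)\<^sup>2)"
    by (rule Cauchy_Schwarz_ineq_sum)
  also have "\<dots> = (\<Sum>j<n. a j) * (\<Sum>j<n. a j * (x j)\<^sup>2)"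
    using assms by (simp add: power_mult_distrib)
  finally show ?thesis .
qed

lemma sum_sq_weighted_sums_le:
  fixes a :: "nat \<Rightarrow> nat \<Rightarrow> real" and x :: "nat \<Rightarrow> real"
  assumes a0: "\<And>i j. 0 \<le> a i j" and R: "0 \<le> R"
    and rows: "\<And>i. i < n \<Longrightarrow> (\<Sum>j<n. a i j) \<le> R"
    and cols: "\<And>j. j < n \<Longrightarrow> (\<Sum>i<n. a i j) \<le> R"
  shows "(\<Sum>i<n. (\<Sum>j<n. a i j * x j)\<^sup>2) \<le> R\<^sup>2 * (\<Sum>j<n. (x j)\<^sup>2)"
proof -
  have "(\<Sum>i<n. (\<Sum>j<n. a i j * x j)\<^sup>2) \<le> (\<Sum>i<n. R * (\<Sum>j<n. a i j * (x j)\<^sup>2))"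
  proof (rule sum_mono)
    fix i assume "i \<in> {..<n}"
    then have "(\<Sum>j<n. a i j) * (\<Sum>j<n. a i j * (x j)\<^sup>2) \<le> R * (\<Sum>j<n. a i j * (x j)\<^sup>2)"
      using rows a0 by (intro mult_right_mono sum_nonneg) auto
    then show "(\<Sum>j<n. a i j * x j)\<^sup>2 \<le> R * (\<Sum>j<n. a i j * (x j)\<^sup>2)"
      using weighted_Cauchy_Schwarz_sum[OF a0] by (meson order_trans)
  qed
  also have "\<dots> = R * (\<Sum>i<n. \<Sum>j<n. a i j * (x j)\<^sup>2)"
    by (simp add: sum_distrib_left)
  also have "\<dots> = R * (\<Sum>j<n. (\<Sum>i<n. a i j) * (x j)\<^sup>2)"
    by (subst sum.swap) (simp add: sum_distrib_right)
  also have "\<dots> \<le> R * (\<Sum>j<n. R * (x j)\<^sup>2)"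
    using cols R by (intro mult_left_mono sum_mono mult_right_mono) auto
  also have "\<dots> = R\<^sup>2 * (\<Sum>j<n. (x j)\<^sup>2)"
    by (simp add: sum_distrib_left power2_eq_square mult.assoc)
  finally show ?thesis .
qed

lemma opnorm_schur_test:
  assumes A: "A \<in> carrier_mat n n" and R: "0 \<le> R"
    and rows: "\<And>i. i < n \<Longrightarrow> (\<Sum>j<n. cmod (A $$ (i, j))) \<le> R"
    and cols: "\<And>j. j < n \<Longrightarrow> (\<Sum>i<n. cmod (A $$ (i, j))) \<le> R"
  shows "opnorm A \<le> R"
proof (rule opnorm_leI[OF R])
  fix v :: "complex vec" assume "dim_vec v = dim_col A"
  then have v: "dim_vec v = n" using A by simp
  define s where "s i = (\<Sum>j<n. cmod (A $$ (i, j)) * cmod (v $ j))" for i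
  have "vnorm (A *\<^sub>v v) \<le> L2_set s {..<n}"
  proof (rule vnorm_le_L2_set)
    fix i assume "i < n"
    then have "(A *\<^sub>v v) $ i = (\<Sum>j<n. A $$ (i, j) * v $ j)"
      using A v by (subst index_mult_mat_vec_sum) auto
    also have "cmod \<dots> \<le> s i"
      unfolding s_def by (rule order_trans[OF norm_sum]) (simp add: norm_mult)
    finally show "cmod ((A *\<^sub>v v) $ i) \<le> s i" .
  qed (use A in simp)
  also have "L2_set s {..<n} \<le> sqrt (R\<^sup>2 * (\<Sum>j<n. (cmod (v $ j))\<^sup>2))"
    unfolding L2_set_def s_def
    by (intro real_sqrt_le_mono sum_sq_weighted_sums_le) (use R rows cols in auto)
  also have "\<dots> = R * vnorm v"
    using R v by (simp add: vnorm_def real_sqrt_mult)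
  finally show "vnorm (A *\<^sub>v v) \<le> R * vnorm v" .
qed

section \<open>Adjoints, unitary matrices and the spectral theorem\<close>

definition adj :: "complex mat \<Rightarrow> complex mat" where
  "adj A = mat (dim_col A) (dim_row A) (\<lambda>(i, j). cnj (A $$ (j, i)))"

lemma adj_carrier [simp]: "A \<in> carrier_mat n k \<Longrightarrow> adj A \<in> carrier_mat k n"
  unfolding adj_def by auto

lemma adj_dims [simp]: "dim_row (adj A) = dim_col A" "dim_col (adj A) = dim_row A"
  unfolding adj_def by auto

lemma index_adj [simp]: "i < dim_col A \<Longrightarrow> j < dim_row A \<Longrightarrow> adj A $$ (i, j) = cnj (A $$ (j, i))"
  unfolding adj_def by auto

lemma adj_adj [simp]: "adj (adj A) = A"
  by (rule eq_matI) (auto simp: adj_def)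

lemma adj_one_mat [simp]: "adj (1\<^sub>m n) = 1\<^sub>m n"
  by (rule eq_matI) (auto simp: adj_def)

lemma adj_mult:
  assumes A: "A \<in> carrier_mat n k" and B: "B \<in> carrier_mat k l"
  shows "adj (A * B) = adj B * adj A"
proof (rule eq_matI)
  fix i j assume "i < dim_row (adj B * adj A)" "j < dim_col (adj B * adj A)"
  then have i: "i < l" and j: "j < n" using A B by auto
  have "adj (A * B) $$ (i, j) = cnj (\<Sum>t<k. A $$ (j, t) * B $$ (t, i))"
    using A B i j by (simp add: index_mult_mat_sum[OF A B j i])
  also have "\<dots> = (\<Sum>t<k. adj B $$ (i, t) * adj A $$ (t, j))"
    using A B i j by (simp add: mult.commute)
  also have "\<dots> = (adj B * adj A) $$ (i, j)"
    by (rule index_mult_mat_sum[symmetric, of _ l k _ n]) (use A B i j in auto)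
  finally show "adj (A * B) $$ (i, j) = (adj B * adj A) $$ (i, j)" .
qed (use A B in auto)

lemma selfadjoint_iff_adj: "selfadjoint n A \<longleftrightarrow> A \<in> carrier_mat n n \<and> adj A = A"
proof
  assume "selfadjoint n A"
  then have A: "A \<in> carrier_mat n n"
    and hA: "\<And>i j. i < n \<Longrightarrow> j < n \<Longrightarrow> A $$ (i, j) = cnj (A $$ (j, i))"
    unfolding selfadjoint_def by blast+
  have "adj A = A"
  proof (rule eq_matI)
    fix i j assume "i < dim_row A" "j < dim_col A"
    then show "adj A $$ (i, j) = A $$ (i, j)" using A hA[of i j] by simp
  qed (use A in auto)
  then show "A \<in> carrier_mat n n \<and> adj A = A" using A by simp
next
  assume A: "A \<in> carrier_mat n n \<and> adj A = A"
  have "A $$ (i, j) = cnj (A $$ (j, i))" if "i < n" "j < n" for i j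
    using A that index_adj[of i A j] by auto
  then show "selfadjoint n A" using A unfolding selfadjoint_def by blast
qed

lemma selfadjoint_carrier: "selfadjoint n A \<Longrightarrow> A \<in> carrier_mat n n"
  unfolding selfadjoint_def by blast

lemma selfadjoint_smult_real:
  assumes "selfadjoint n A"
  shows "selfadjoint n (complex_of_real c \<cdot>\<^sub>m A)"
proof -
  have A: "A \<in> carrier_mat n n" and aA: "adj A = A" using assms by (auto simp: selfadjoint_iff_adj)
  have "adj (complex_of_real c \<cdot>\<^sub>m A) = complex_of_real c \<cdot>\<^sub>m adj A"
    using A by (intro eq_matI) auto
  then show ?thesis using A aA by (simp add: selfadjoint_iff_adj)
qed

lemma selfadjoint_conj:
  assumes A: "selfadjoint n A" and W: "W \<in> carrier_mat n k"
  shows "selfadjoint k (adj W * A * W)"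
proof -
  have Ac: "A \<in> carrier_mat n n" and aA: "adj A = A" using A by (auto simp: selfadjoint_iff_adj)
  have c1: "adj W * A \<in> carrier_mat k n" using mult_carrier_mat[OF adj_carrier[OF W] Ac] .
  have "adj (adj W * A * W) = adj W * (adj A * adj (adj W))"
    using adj_mult[OF c1 W] adj_mult[OF adj_carrier[OF W] Ac] by simp
  also have "\<dots> = adj W * A * W"
    using Ac W aA by (simp add: assoc_mult_mat[of _ k n _ n _ k])
  finally show ?thesis unfolding selfadjoint_iff_adj using c1 W by simp
qed

lemma cscalar_prod_self: "w \<bullet>c w = complex_of_real ((vnorm w)\<^sup>2)"
proof -
  have "w \<bullet>c w = (\<Sum>i<dim_vec w. w $ i * cnj (w $ i))"
    by (simp add: scalar_prod_def atLeast0LessThan)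
  also have "\<dots> = (\<Sum>i<dim_vec w. complex_of_real ((cmod (w $ i))\<^sup>2))"
    by (intro sum.cong refl) (rule complex_norm_square[symmetric])
  also have "\<dots> = complex_of_real ((vnorm w)\<^sup>2)"
    unfolding vnorm_def by (simp add: sum_nonneg)
  finally show ?thesis .
qed

definition unitary :: "nat \<Rightarrow> complex mat \<Rightarrow> bool" where
  "unitary n U \<longleftrightarrow> U \<in> carrier_mat n n \<and> adj U * U = 1\<^sub>m n \<and> U * adj U = 1\<^sub>m n"

lemma unitaryI:
  assumes U: "U \<in> carrier_mat n n" and "adj U * U = 1\<^sub>m n"
  shows "unitary n U"
  unfolding unitary_def using assms mat_mult_left_right_inverse[OF adj_carrier[OF U] U] by simp

lemma unitary_carrier: "unitary n U \<Longrightarrow> U \<in> carrier_mat n n"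
  unfolding unitary_def by blast

lemma unitary_adj: "unitary n U \<Longrightarrow> unitary n (adj U)"
  unfolding unitary_def by auto

lemma unitary_mult:
  assumes U: "unitary n U" and V: "unitary n V"
  shows "unitary n (U * V)"
proof (rule unitaryI)
  have Uc: "U \<in> carrier_mat n n" and Vc: "V \<in> carrier_mat n n"
    using U V by (auto simp: unitary_def)
  then show "U * V \<in> carrier_mat n n" by simp
  have "adj (U * V) * (U * V) = adj V * ((adj U * U) * V)"
    using Uc Vc by (simp add: adj_mult[OF Uc Vc] assoc_mult_mat[of _ n n _ n _ n])
  also have "\<dots> = 1\<^sub>m n" using U V Vc unfolding unitary_def by simp
  finally show "adj (U * V) * (U * V) = 1\<^sub>m n" .
qed

lemma unitary_conj_eq_iff:
  assumes U: "unitary n U" and A: "A \<in> carrier_mat n n" and D: "D \<in> carrier_mat n n"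
  shows "adj U * A * U = D \<longleftrightarrow> A = U * D * adj U"
proof -
  have Uc: "U \<in> carrier_mat n n" and UU: "adj U * U = 1\<^sub>m n" "U * adj U = 1\<^sub>m n"
    using U by (auto simp: unitary_def)
  have "U * (adj U * A * U) * adj U = (U * adj U) * A * (U * adj U)"
    "adj U * (U * D * adj U) * U = (adj U * U) * D * (adj U * U)"
    using Uc A D by (simp_all add: assoc_mult_mat[of _ n n _ n _ n] mult_carrier_mat[of _ n n _ n])
  then show ?thesis using A D by (auto simp: UU)
qed

lemma unitary_sum_sq_col:
  assumes U: "unitary n U" and k: "k < n"
  shows "(\<Sum>i<n. (cmod (U $$ (i, k)))\<^sup>2) = 1"
proof -
  have Uc: "U \<in> carrier_mat n n" and UU: "adj U * U = 1\<^sub>m n" using U unfolding unitary_def by auto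
  have "complex_of_real (\<Sum>i<n. (cmod (U $$ (i, k)))\<^sup>2) = (\<Sum>i<n. cnj (U $$ (i, k)) * U $$ (i, k))"
    unfolding of_real_sum by (intro sum.cong refl) (subst complex_norm_square, rule mult.commute)
  also have "\<dots> = (adj U * U) $$ (k, k)"
    using Uc k by (subst index_mult_mat_sum[OF adj_carrier[OF Uc] Uc k k]) (intro sum.cong refl; simp)
  also have "\<dots> = 1" using UU k by simp
  finally show ?thesis by (metis of_real_eq_1_iff)
qed

lemma unitary_sum_sq_row:
  assumes U: "unitary n U" and k: "k < n"
  shows "(\<Sum>i<n. (cmod (U $$ (k, i)))\<^sup>2) = 1"
  using unitary_sum_sq_col[OF unitary_adj[OF U] k] unitary_carrier[OF U] k by simp

definition real_diag_mat :: "nat \<Rightarrow> (nat \<Rightarrow> real) \<Rightarrow> complex mat" where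
  "real_diag_mat n lam = mat n n (\<lambda>(i, j). if i = j then complex_of_real (lam i) else 0)"

lemma real_diag_mat_carrier [simp]: "real_diag_mat n lam \<in> carrier_mat n n"
  unfolding real_diag_mat_def by simp

lemma index_unitary_conj_real_diag_mat:
  assumes U: "U \<in> carrier_mat n n" and i: "i < n" and j: "j < n"
  shows "(U * real_diag_mat n lam * adj U) $$ (i, j)
    = (\<Sum>k<n. U $$ (i, k) * complex_of_real (lam k) * cnj (U $$ (j, k)))"
proof -
  have UD: "(U * real_diag_mat n lam) $$ (i, k) = U $$ (i, k) * complex_of_real (lam k)"
    if k: "k < n" for k
  proof -
    have "(U * real_diag_mat n lam) $$ (i, k) = (\<Sum>t<n. U $$ (i, t) * real_diag_mat n lam $$ (t, k))"
      by (rule index_mult_mat_sum[OF U real_diag_mat_carrier i k])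
    also have "\<dots> = (\<Sum>t<n. if t = k then U $$ (i, t) * complex_of_real (lam k) else 0)"
      using k by (intro sum.cong refl) (auto simp: real_diag_mat_def)
    finally show ?thesis using k by simp
  qed
  have "(U * real_diag_mat n lam * adj U) $$ (i, j)
      = (\<Sum>k<n. (U * real_diag_mat n lam) $$ (i, k) * adj U $$ (k, j))"
    by (rule index_mult_mat_sum[of _ n n _ n]) (use U i j in auto)
  also have "\<dots> = (\<Sum>k<n. U $$ (i, k) * complex_of_real (lam k) * cnj (U $$ (j, k)))"
    using U j by (intro sum.cong refl) (simp add: UD)
  finally show ?thesis .
qed

lemma diag_unitary_conj_real_diag_mat:
  assumes U: "U \<in> carrier_mat n n" and i: "i < n"
  shows "(U * real_diag_mat n lam * adj U) $$ (i, i)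
    = complex_of_real (\<Sum>k<n. (cmod (U $$ (i, k)))\<^sup>2 * lam k)"
proof -
  have "(U * real_diag_mat n lam * adj U) $$ (i, i)
      = (\<Sum>k<n. (U $$ (i, k) * cnj (U $$ (i, k))) * complex_of_real (lam k))"
    unfolding index_unitary_conj_real_diag_mat[OF U i i] by (simp add: mult_ac)
  also have "\<dots> = (\<Sum>k<n. complex_of_real ((cmod (U $$ (i, k)))\<^sup>2 * lam k))"
    by (simp add: complex_norm_square[symmetric])
  finally show ?thesis by simp
qed

definition diag_block :: "complex \<Rightarrow> complex mat \<Rightarrow> complex mat" where
  "diag_block c B = mat (Suc (dim_row B)) (Suc (dim_col B)) (\<lambda>(i, j).
     if i = 0 \<and> j = 0 then c else if i = 0 \<or> j = 0 then 0 else B $$ (i - 1, j - 1))"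

lemma diag_block_carrier [simp]: "B \<in> carrier_mat m k \<Longrightarrow> diag_block c B \<in> carrier_mat (Suc m) (Suc k)"
  unfolding diag_block_def by auto

lemma diag_block_mult:
  assumes A: "A \<in> carrier_mat m k" and B: "B \<in> carrier_mat k l"
  shows "diag_block a A * diag_block b B = diag_block (a * b) (A * B)"
proof (rule eq_matI)
  fix i j assume "i < dim_row (diag_block (a * b) (A * B))" "j < dim_col (diag_block (a * b) (A * B))"
  then have i: "i < Suc m" and j: "j < Suc l" using A B by (auto simp: diag_block_def)
  have "(diag_block a A * diag_block b B) $$ (i, j)
      = diag_block a A $$ (i, 0) * diag_block b B $$ (0, j)
        + (\<Sum>t<k. diag_block a A $$ (i, Suc t) * diag_block b B $$ (Suc t, j))"
    using A B i j
    by (subst index_mult_mat_sum[of _ "Suc m" "Suc k" _ "Suc l"])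
      (simp_all add: sum.lessThan_Suc_shift del: sum.lessThan_Suc)
  also have "\<dots> = diag_block (a * b) (A * B) $$ (i, j)"
    using A B i j by (cases i; cases j) (auto simp: diag_block_def scalar_prod_def atLeast0LessThan)
  finally show "(diag_block a A * diag_block b B) $$ (i, j) = diag_block (a * b) (A * B) $$ (i, j)" .
qed (use A B in \<open>auto simp: diag_block_def\<close>)

lemma adj_diag_block: "adj (diag_block c B) = diag_block (cnj c) (adj B)"
  by (rule eq_matI) (auto simp: diag_block_def adj_def)

lemma diag_block_one_mat: "diag_block 1 (1\<^sub>m m) = 1\<^sub>m (Suc m)"
  by (rule eq_matI) (auto simp: diag_block_def)

lemma real_diag_mat_Suc:
  "real_diag_mat (Suc m) lam = diag_block (complex_of_real (lam 0)) (real_diag_mat m (\<lambda>i. lam (Suc i)))"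
  by (rule eq_matI) (auto simp: diag_block_def real_diag_mat_def)

lemma unitary_diag_block:
  assumes "unitary m U"
  shows "unitary (Suc m) (diag_block 1 U)"
proof (rule unitaryI)
  have U: "U \<in> carrier_mat m m" and "adj U * U = 1\<^sub>m m" using assms by (auto simp: unitary_def)
  then show "adj (diag_block 1 U) * diag_block 1 U = 1\<^sub>m (Suc m)"
    by (simp add: adj_diag_block diag_block_mult[of _ m m] diag_block_one_mat)
qed (use assms in \<open>simp add: unitary_def\<close>)

lemma unitary_first_column_exists:
  assumes u: "u \<in> carrier_vec n" and u1: "vnorm u = 1"
  shows "\<exists>W. unitary n W \<and> (\<forall>i<n. W $$ (i, 0) = u $ i)"
proof -
  interpret cof_vec_space n "TYPE(complex)" .
  have u0: "u \<noteq> 0\<^sub>v n" using u1 by auto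
  then have "n \<noteq> 0" using u by auto
  from basis_completion[OF u u0] obtain vs where b: "basis_completion u = u # vs"
    and b_props: "set (u # vs) \<subseteq> carrier_vec n" "distinct (u # vs)" "\<not> lin_dep (set (u # vs))"
      "length (u # vs) = n"
    using \<open>n \<noteq> 0\<close> by (cases "basis_completion u") auto
  define ws where "ws = gram_schmidt n (u # vs)"
  from gram_schmidt_result[OF b_props(1-3) ws_def]
  have ws: "corthogonal ws" "set ws \<subseteq> carrier_vec n" "length ws = n"
    using b_props(4) by auto
  have "hd ws = u" unfolding ws_def using u by simp
  then have ws0: "ws ! 0 = u" using \<open>n \<noteq> 0\<close> ws(3) by (cases ws) auto
  have wsc: "j < n \<Longrightarrow> ws ! j \<in> carrier_vec n" for j using ws by auto
  have nz: "vnorm (ws ! j) \<noteq> 0" if "j < n" for j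
    using corthogonalD[OF ws(1)] that ws(3) cscalar_prod_self[of "ws ! j"] by auto
  define W where "W = mat n n (\<lambda>(i, j). (ws ! j) $ i / complex_of_real (vnorm (ws ! j)))"
  have W: "W \<in> carrier_mat n n" unfolding W_def by simp
  have "adj W * W = 1\<^sub>m n"
  proof (rule eq_matI)
    fix j k assume "j < dim_row (1\<^sub>m n :: complex mat)" "k < dim_col (1\<^sub>m n :: complex mat)"
    then have j: "j < n" and k: "k < n" by auto
    have "(adj W * W) $$ (j, k)
        = (ws ! k \<bullet>c ws ! j) / (complex_of_real (vnorm (ws ! j)) * complex_of_real (vnorm (ws ! k)))"
      using W j k wsc[OF j] wsc[OF k]
      by (simp add: index_mult_mat_sum[of _ n n _ n] W_def scalar_prod_def atLeast0LessThan
          sum_divide_distrib mult.commute)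
    also have "\<dots> = 1\<^sub>m n $$ (j, k)"
      using j k nz[OF j] corthogonalD[OF ws(1)] ws(3)
      by (cases "j = k") (auto simp: cscalar_prod_self power2_eq_square)
    finally show "(adj W * W) $$ (j, k) = 1\<^sub>m n $$ (j, k)" .
  qed (use W in auto)
  moreover have "\<forall>i<n. W $$ (i, 0) = u $ i"
    using \<open>n \<noteq> 0\<close> u1 ws0 by (simp add: W_def)
  ultimately show ?thesis using unitaryI[OF W] by blast
qed

lemma unit_eigenvector_exists:
  assumes A: "A \<in> carrier_mat n n" and n: "0 < n"
  shows "\<exists>e u. u \<in> carrier_vec n \<and> vnorm u = 1 \<and> A *\<^sub>v u = e \<cdot>\<^sub>v u"
proof -
  obtain e where "eigenvalue A e" using spectrum_non_empty[OF A n] by (auto simp: spectrum_def)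
  then obtain v where v: "v \<in> carrier_vec n" "v \<noteq> 0\<^sub>v n" and Av: "A *\<^sub>v v = e \<cdot>\<^sub>v v"
    using A by (auto simp: eigenvalue_def eigenvector_def)
  have "vnorm v \<noteq> 0"
    using v vnorm_eq_0_iff[of v] by (auto intro!: eq_vecI)
  then have pos: "vnorm v > 0" using vnorm_nonneg[of v] by linarith
  define u where "u = complex_of_real (1 / vnorm v) \<cdot>\<^sub>v v"
  have "A *\<^sub>v u = e \<cdot>\<^sub>v u"
    unfolding u_def using A v Av by (simp add: mult_mat_vec smult_smult_assoc mult.commute)
  moreover have "vnorm u = 1" unfolding u_def vnorm_smult using pos by (simp add: norm_divide)
  ultimately show ?thesis using v unfolding u_def by auto
qed

lemma conj_eigenvector_first_column:
  assumes W: "unitary n W" and Wu: "\<forall>i<n. W $$ (i, 0) = u $ i"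
    and A: "A \<in> carrier_mat n n" and u: "u \<in> carrier_vec n" and Au: "A *\<^sub>v u = e \<cdot>\<^sub>v u"
    and i: "i < n"
  shows "(adj W * A * W) $$ (i, 0) = (if i = 0 then e else 0)"
proof -
  have Wc: "W \<in> carrier_mat n n" and WW: "adj W * W = 1\<^sub>m n" using W by (auto simp: unitary_def)
  have n0: "0 < n" using i by simp
  have AW: "(A * W) $$ (k, 0) = e * W $$ (k, 0)" if k: "k < n" for k
  proof -
    have "(A * W) $$ (k, 0) = (\<Sum>t<n. A $$ (k, t) * u $ t)"
      using Wu by (simp add: index_mult_mat_sum[OF A Wc k n0])
    also have "\<dots> = (A *\<^sub>v u) $ k"
      using A u k by (subst index_mult_mat_vec_sum) auto
    finally show ?thesis using Au k u Wu by simp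
  qed
  have "(adj W * A * W) $$ (i, 0) = (adj W * (A * W)) $$ (i, 0)"
    using A Wc by (simp add: assoc_mult_mat[of _ n n _ n _ n])
  also have "\<dots> = e * (\<Sum>k<n. adj W $$ (i, k) * W $$ (k, 0))"
    by (simp add: index_mult_mat_sum[OF adj_carrier[OF Wc] mult_carrier_mat[OF A Wc] i n0] AW
        sum_distrib_left mult_ac)
  also have "\<dots> = e * (adj W * W) $$ (i, 0)"
    by (simp add: index_mult_mat_sum[OF adj_carrier[OF Wc] Wc i n0])
  finally show ?thesis using WW i n0 by simp
qed

lemma selfadjoint_diag_block_if_first_column:
  assumes sa: "selfadjoint (Suc m) A"
    and col0: "\<And>i. i < Suc m \<Longrightarrow> A $$ (i, 0) = (if i = 0 then e else 0)"
  shows "\<exists>r B. selfadjoint m B \<and> A = diag_block (complex_of_real r) B"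
proof -
  have Ac: "A \<in> carrier_mat (Suc m) (Suc m)"
    and hA: "\<And>i j. i < Suc m \<Longrightarrow> j < Suc m \<Longrightarrow> A $$ (i, j) = cnj (A $$ (j, i))"
    using sa unfolding selfadjoint_def by blast+
  have e_real: "complex_of_real (Re e) = e"
    using hA[of 0 0] col0[of 0] by (simp add: complex_eq_iff)
  define B where "B = mat m m (\<lambda>(i, j). A $$ (Suc i, Suc j))"
  have "selfadjoint m B"
    unfolding selfadjoint_def B_def
  proof (intro conjI allI impI)
    fix i j assume "i < m" "j < m"
    then show "mat m m (\<lambda>(i, j). A $$ (Suc i, Suc j)) $$ (i, j)
        = cnj (mat m m (\<lambda>(i, j). A $$ (Suc i, Suc j)) $$ (j, i))"
      using hA[of "Suc i" "Suc j"] by simp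
  qed simp
  moreover have "A = diag_block (complex_of_real (Re e)) B"
  proof (rule eq_matI)
    fix i j assume "i < dim_row (diag_block (complex_of_real (Re e)) B)"
      "j < dim_col (diag_block (complex_of_real (Re e)) B)"
    then have i: "i < Suc m" and j: "j < Suc m" by (auto simp: B_def diag_block_def)
    show "A $$ (i, j) = diag_block (complex_of_real (Re e)) B $$ (i, j)"
    proof (cases "j = 0")
      case True
      then show ?thesis using i col0 e_real by (auto simp: diag_block_def B_def)
    next
      case False
      then show ?thesis using i j hA[OF i j] col0[OF j] by (auto simp: diag_block_def B_def)
    qed
  qed (use Ac in \<open>auto simp: diag_block_def B_def\<close>)
  ultimately show ?thesis by blast
qed

text \<open>Conjugating by a unitary matrix whose first column is a unit eigenvector splits off
  the corresponding (real) eigenvalue.\<close>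

lemma selfadjoint_deflation:
  assumes sa: "selfadjoint (Suc m) A"
  obtains W r B where "unitary (Suc m) W" "selfadjoint m B"
    "adj W * A * W = diag_block (complex_of_real r) B"
proof -
  have A: "A \<in> carrier_mat (Suc m) (Suc m)" using sa by (rule selfadjoint_carrier)
  obtain e u where u: "u \<in> carrier_vec (Suc m)" "vnorm u = 1" and Au: "A *\<^sub>v u = e \<cdot>\<^sub>v u"
    using unit_eigenvector_exists[OF A] by auto
  obtain W where W: "unitary (Suc m) W" and Wu: "\<forall>i<Suc m. W $$ (i, 0) = u $ i"
    using unitary_first_column_exists[OF u] by blast
  have "selfadjoint (Suc m) (adj W * A * W)"
    using selfadjoint_conj[OF sa unitary_carrier[OF W]] .
  with conj_eigenvector_first_column[OF W Wu A u(1) Au]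
  obtain r B where "selfadjoint m B" "adj W * A * W = diag_block (complex_of_real r) B"
    using selfadjoint_diag_block_if_first_column by blast
  with W show ?thesis by (rule that)
qed

lemma adj_mult_conj:
  assumes "W \<in> carrier_mat n n" "V \<in> carrier_mat n n" "A \<in> carrier_mat n n"
  shows "adj (W * V) * A * (W * V) = adj V * (adj W * A * W) * V"
  using assms
  by (simp add: adj_mult[of _ n n _ n] assoc_mult_mat[of _ n n _ n _ n] mult_carrier_mat[of _ n n _ n])

theorem selfadjoint_unitarily_diagonalizable:
  assumes "selfadjoint n A"
  shows "\<exists>U lam. unitary n U \<and> adj U * A * U = real_diag_mat n lam"
  using assms
proof (induction n arbitrary: A)
  case 0
  have "unitary 0 (1\<^sub>m 0)" by (rule unitaryI) auto
  moreover have "adj (1\<^sub>m 0) * A * 1\<^sub>m 0 = real_diag_mat 0 (\<lambda>_. 0)"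
    by (rule eq_matI) (simp_all add: real_diag_mat_def)
  ultimately show ?case by blast
next
  case (Suc m A)
  obtain W e B where W: "unitary (Suc m) W" and B: "selfadjoint m B"
    and WAW: "adj W * A * W = diag_block (complex_of_real e) B"
    using selfadjoint_deflation[OF Suc.prems] by blast
  obtain U' lam' where U': "unitary m U'" and U'BU': "adj U' * B * U' = real_diag_mat m lam'"
    using Suc.IH[OF B] by blast
  have Bc: "B \<in> carrier_mat m m" and U'c: "U' \<in> carrier_mat m m"
    using selfadjoint_carrier[OF B] unitary_carrier[OF U'] .
  define V where "V = diag_block 1 U'"
  have V: "unitary (Suc m) V" unfolding V_def by (rule unitary_diag_block[OF U'])
  have "adj (W * V) * A * (W * V) = adj V * diag_block (complex_of_real e) B * V"
    using adj_mult_conj[OF unitary_carrier[OF W] unitary_carrier[OF V] selfadjoint_carrier[OF Suc.prems]]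
    by (simp add: WAW)
  also have "\<dots> = diag_block (complex_of_real e) (adj U' * B * U')"
    using Bc U'c
    by (simp add: V_def adj_diag_block diag_block_mult[of _ m m] mult_carrier_mat[of _ m m _ m])
  also have "\<dots> = real_diag_mat (Suc m) (case_nat e lam')"
    by (simp add: U'BU' real_diag_mat_Suc)
  finally show ?case using unitary_mult[OF W V] by blast
qed

corollary selfadjoint_spectral_decomposition:
  assumes "selfadjoint n A"
  obtains U lam where "unitary n U" "A = U * real_diag_mat n lam * adj U"
proof -
  obtain U lam where U: "unitary n U" and "adj U * A * U = real_diag_mat n lam"
    using selfadjoint_unitarily_diagonalizable[OF assms] by blast
  then have "A = U * real_diag_mat n lam * adj U"
    using unitary_conj_eq_iff[OF U selfadjoint_carrier[OF assms] real_diag_mat_carrier] by blast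
  with U show ?thesis by (rule that)
qed

section \<open>The trace of the exponential\<close>

lemma real_diag_mat_mult: "real_diag_mat n a * real_diag_mat n b = real_diag_mat n (\<lambda>i. a i * b i)"
proof (rule eq_matI)
  fix i j assume "i < dim_row (real_diag_mat n (\<lambda>i. a i * b i))"
    "j < dim_col (real_diag_mat n (\<lambda>i. a i * b i))"
  then have i: "i < n" and j: "j < n" by (auto simp: real_diag_mat_def)
  have "(real_diag_mat n a * real_diag_mat n b) $$ (i, j)
      = (\<Sum>t<n. real_diag_mat n a $$ (i, t) * real_diag_mat n b $$ (t, j))"
    by (rule index_mult_mat_sum[OF real_diag_mat_carrier real_diag_mat_carrier i j])
  also have "\<dots> = (\<Sum>t<n. if t = i then (if i = j then complex_of_real (a i * b i) else 0) else 0)"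
    using i j by (intro sum.cong refl) (auto simp: real_diag_mat_def)
  also have "\<dots> = real_diag_mat n (\<lambda>i. a i * b i) $$ (i, j)" using i j by (simp add: real_diag_mat_def)
  finally show "(real_diag_mat n a * real_diag_mat n b) $$ (i, j)
      = real_diag_mat n (\<lambda>i. a i * b i) $$ (i, j)" .
qed (auto simp: real_diag_mat_def)

lemma power_unitary_conj_real_diag_mat:
  assumes U: "unitary n U"
  shows "(U * real_diag_mat n lam * adj U) ^\<^sub>m k = U * real_diag_mat n (\<lambda>i. lam i ^ k) * adj U"
proof (induction k)
  case 0
  have "real_diag_mat n (\<lambda>i. lam i ^ 0) = 1\<^sub>m n" by (rule eq_matI) (auto simp: real_diag_mat_def)
  moreover have "U \<in> carrier_mat n n" "U * adj U = 1\<^sub>m n" using U by (auto simp: unitary_def)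
  ultimately show ?case by simp
next
  case (Suc k)
  have Uc: "U \<in> carrier_mat n n" and UU: "adj U * U = 1\<^sub>m n" using U by (auto simp: unitary_def)
  have cancel: "adj U * (U * X) = X" if "X \<in> carrier_mat n n" for X
    using that Uc UU by (simp flip: assoc_mult_mat[of _ n n _ n _ n])
  have "(U * real_diag_mat n lam * adj U) ^\<^sub>m Suc k
      = U * (real_diag_mat n (\<lambda>i. lam i ^ k) * real_diag_mat n lam) * adj U"
    using Suc Uc
    by (simp add: assoc_mult_mat[of _ n n _ n _ n] mult_carrier_mat[of _ n n _ n] cancel)
  then show ?case by (simp add: real_diag_mat_mult mult.commute)
qed

lemma trace_mexp_unitary_conj_real_diag_mat:
  assumes U: "unitary n U"
  shows "mtrace (mexp (U * real_diag_mat n lam * adj U)) = complex_of_real (\<Sum>k<n. exp (lam k))"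
proof -
  have Uc: "U \<in> carrier_mat n n" using U by (rule unitary_carrier)
  define X where "X = U * real_diag_mat n lam * adj U"
  have Xc: "X \<in> carrier_mat n n"
    unfolding X_def
    using mult_carrier_mat[OF mult_carrier_mat[OF Uc real_diag_mat_carrier] adj_carrier[OF Uc]] .
  define c where "c i l = (cmod (U $$ (i, l)))\<^sup>2" for i l
  have diag: "mexp X $$ (i, i) = complex_of_real (\<Sum>l<n. c i l * exp (lam l))" if i: "i < n" for i
  proof -
    have "(X ^\<^sub>m k) $$ (i, i) / of_nat (fact k) = complex_of_real (\<Sum>l<n. c i l * (lam l ^ k / fact k))"
      for k
      unfolding X_def power_unitary_conj_real_diag_mat[OF U]
      by (simp add: diag_unitary_conj_real_diag_mat[OF Uc i] c_def sum_divide_distrib)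
    moreover have "(\<lambda>k. \<Sum>l<n. c i l * (lam l ^ k / fact k)) sums (\<Sum>l<n. c i l * exp (lam l))"
    proof (intro sums_sum sums_mult)
      show "(\<lambda>k. lam l ^ k / fact k) sums exp (lam l)" for l
        using exp_converges[of "lam l"] by (simp add: divide_inverse scaleR_conv_of_real mult.commute)
    qed
    ultimately have "(\<lambda>k. (X ^\<^sub>m k) $$ (i, i) / of_nat (fact k))
        sums complex_of_real (\<Sum>l<n. c i l * exp (lam l))"
      by (simp only: sums_of_real_iff)
    then show ?thesis unfolding mexp_def using Xc i by (simp add: sums_iff)
  qed
  have "mtrace (mexp X) = (\<Sum>i<n. mexp X $$ (i, i))"
    unfolding mtrace_def mexp_def using Xc by simp
  also have "\<dots> = complex_of_real (\<Sum>i<n. \<Sum>l<n. c i l * exp (lam l))"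
    by (simp add: diag)
  also have "(\<Sum>i<n. \<Sum>l<n. c i l * exp (lam l)) = (\<Sum>l<n. exp (lam l) * (\<Sum>i<n. c i l))"
    by (subst sum.swap) (simp add: sum_distrib_left mult.commute)
  also have "\<dots> = (\<Sum>l<n. exp (lam l))"
    by (intro sum.cong refl) (simp add: c_def unitary_sum_sq_col[OF U])
  finally show ?thesis unfolding X_def .
qed

section \<open>Lipschitz continuity of the log-trace of the exponential\<close>

lemma sum_exp_le_doubly_stochastic:
  fixes p :: "nat \<Rightarrow> nat \<Rightarrow> real"
  assumes p0: "\<And>i j. 0 \<le> p i j"
    and rows: "\<And>i. i < n \<Longrightarrow> (\<Sum>j<n. p i j) = 1"
    and cols: "\<And>j. j < n \<Longrightarrow> (\<Sum>i<n. p i j) = 1"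
    and le: "\<And>i. i < n \<Longrightarrow> a i \<le> \<epsilon> + (\<Sum>j<n. p i j * b j)"
  shows "(\<Sum>i<n. exp (a i)) \<le> exp \<epsilon> * (\<Sum>j<n. exp (b j))"
proof -
  have "exp (a i) \<le> exp \<epsilon> * (\<Sum>j<n. p i j * exp (b j))" if i: "i < n" for i
  proof -
    have "exp (a i) \<le> exp \<epsilon> * exp (\<Sum>j<n. p i j * b j)"
      using le[OF i] by (simp flip: exp_add)
    also have "exp (\<Sum>j<n. p i j * b j) \<le> (\<Sum>j<n. p i j * exp (b j))"
      using convex_on_sum[OF finite_lessThan _ exp_convex rows[OF i], of b] p0 i by auto
    finally show ?thesis by simp
  qed
  then have "(\<Sum>i<n. exp (a i)) \<le> (\<Sum>i<n. exp \<epsilon> * (\<Sum>j<n. p i j * exp (b j)))"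
    by (intro sum_mono) auto
  also have "\<dots> = exp \<epsilon> * (\<Sum>i<n. \<Sum>j<n. p i j * exp (b j))"
    by (simp add: sum_distrib_left)
  also have "(\<Sum>i<n. \<Sum>j<n. p i j * exp (b j)) = (\<Sum>j<n. (\<Sum>i<n. p i j) * exp (b j))"
    by (subst sum.swap) (simp add: sum_distrib_right)
  also have "\<dots> = (\<Sum>j<n. exp (b j))" by (simp add: cols)
  finally show ?thesis .
qed

lemma cmod_diag_unitary_conj_le_opnorm:
  assumes U: "unitary n U" and C: "C \<in> carrier_mat n n" and i: "i < n"
  shows "cmod ((adj U * C * U) $$ (i, i)) \<le> opnorm C"
proof -
  have Uc: "U \<in> carrier_mat n n" using U by (rule unitary_carrier)
  define u where "u = col U i"
  have u: "dim_vec u = n" "vnorm u = 1"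
    using Uc i unitary_sum_sq_col[OF U i] by (simp_all add: u_def vnorm_def)
  have "(adj U * C * U) $$ (i, i) = (adj U * (C * U)) $$ (i, i)"
    using Uc C by (simp add: assoc_mult_mat[of _ n n _ n _ n])
  also have "\<dots> = (\<Sum>k<n. cnj (u $ k) * (C *\<^sub>v u) $ k)"
    using Uc C i by (simp add: index_mult_mat_sum[OF adj_carrier[OF Uc] mult_carrier_mat[OF C Uc] i i]
        u_def)
  finally show ?thesis using cmod_quadratic_form_le_opnorm[OF C u] by simp
qed

lemma eigenvalue_le_opnorm_diff_plus_mixture:
  assumes U: "unitary n U" and V: "unitary n V"
    and A: "A = U * real_diag_mat n a * adj U" and B: "B = V * real_diag_mat n b * adj V"
    and i: "i < n"
  shows "a i \<le> opnorm (A - B) + (\<Sum>j<n. (cmod ((adj U * V) $$ (i, j)))\<^sup>2 * b j)"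
proof -
  have Uc: "U \<in> carrier_mat n n" and Vc: "V \<in> carrier_mat n n"
    using U V by (auto simp: unitary_def)
  have Ac: "A \<in> carrier_mat n n" and Bc: "B \<in> carrier_mat n n"
    unfolding A B using Uc Vc by (simp_all add: mult_carrier_mat[of _ n n _ n])
  define X where "X = adj U * V"
  have Xc: "X \<in> carrier_mat n n" unfolding X_def using mult_carrier_mat[OF adj_carrier[OF Uc] Vc] .
  have "adj U * A * U = real_diag_mat n a"
    using unitary_conj_eq_iff[OF U Ac real_diag_mat_carrier] A by simp
  moreover have "adj U * B * U = X * real_diag_mat n b * adj X"
    unfolding B X_def using Uc Vc
    by (simp add: adj_mult[of _ n n _ n] assoc_mult_mat[of _ n n _ n _ n] mult_carrier_mat[of _ n n _ n])
  moreover have "adj U * (A - B) * U = adj U * A * U - adj U * B * U"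
    using Uc Ac Bc
    by (simp add: mult_minus_distrib_mat[of _ n n] minus_mult_distrib_mat[of _ n n]
        mult_carrier_mat[of _ n n _ n])
  ultimately have "(adj U * (A - B) * U) $$ (i, i)
      = real_diag_mat n a $$ (i, i) - (X * real_diag_mat n b * adj X) $$ (i, i)"
    using i Xc by (simp add: mult_carrier_mat[of _ n n _ n])
  also have "\<dots> = complex_of_real (a i - (\<Sum>j<n. (cmod (X $$ (i, j)))\<^sup>2 * b j))"
    unfolding diag_unitary_conj_real_diag_mat[OF Xc i] using i by (simp add: real_diag_mat_def)
  finally have diag: "(adj U * (A - B) * U) $$ (i, i)
      = complex_of_real (a i - (\<Sum>j<n. (cmod (X $$ (i, j)))\<^sup>2 * b j))" .
  have "A - B \<in> carrier_mat n n" by (rule minus_carrier_mat[OF Bc])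
  from cmod_diag_unitary_conj_le_opnorm[OF U this i]
  have "\<bar>a i - (\<Sum>j<n. (cmod (X $$ (i, j)))\<^sup>2 * b j)\<bar> \<le> opnorm (A - B)"
    unfolding diag norm_of_real .
  then show ?thesis unfolding X_def by linarith
qed

lemma sum_exp_eigenvalues_le:
  assumes U: "unitary n U" and V: "unitary n V"
    and A: "A = U * real_diag_mat n a * adj U" and B: "B = V * real_diag_mat n b * adj V"
  shows "(\<Sum>i<n. exp (a i)) \<le> exp (opnorm (A - B)) * (\<Sum>j<n. exp (b j))"
proof (rule sum_exp_le_doubly_stochastic)
  have X: "unitary n (adj U * V)" by (rule unitary_mult[OF unitary_adj[OF U] V])
  show "(\<Sum>j<n. (cmod ((adj U * V) $$ (i, j)))\<^sup>2) = 1" if "i < n" for i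
    by (rule unitary_sum_sq_row[OF X that])
  show "(\<Sum>i<n. (cmod ((adj U * V) $$ (i, j)))\<^sup>2) = 1" if "j < n" for j
    by (rule unitary_sum_sq_col[OF X that])
qed (use eigenvalue_le_opnorm_diff_plus_mixture[OF U V A B] in auto)

lemma abs_ln_diff_le:
  fixes x y e :: real
  assumes "0 < x" "0 < y" "x \<le> exp e * y" "y \<le> exp e * x"
  shows "\<bar>ln x - ln y\<bar> \<le> e"
proof -
  have "ln x \<le> e + ln y" "ln y \<le> e + ln x"
    using assms ln_le_cancel_iff[of x "exp e * y"] ln_le_cancel_iff[of y "exp e * x"]
    by (simp_all add: ln_mult)
  then show ?thesis by linarith
qed

lemma ln_trace_mexp_lipschitz:
  assumes A: "selfadjoint n A" and B: "selfadjoint n B" and n: "0 < n"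
  shows "\<bar>ln (Re (mtrace (mexp A))) - ln (Re (mtrace (mexp B)))\<bar> \<le> opnorm (A - B)"
proof -
  obtain U a where U: "unitary n U" and Ad: "A = U * real_diag_mat n a * adj U"
    using selfadjoint_spectral_decomposition[OF A] by blast
  obtain V b where V: "unitary n V" and Bd: "B = V * real_diag_mat n b * adj V"
    using selfadjoint_spectral_decomposition[OF B] by blast
  have "opnorm (B - A) = opnorm (A - B)"
    using opnorm_minus_commute selfadjoint_carrier[OF A] selfadjoint_carrier[OF B] by blast
  then have "(\<Sum>i<n. exp (a i)) \<le> exp (opnorm (A - B)) * (\<Sum>j<n. exp (b j))"
    "(\<Sum>i<n. exp (b i)) \<le> exp (opnorm (A - B)) * (\<Sum>j<n. exp (a j))"
    using sum_exp_eigenvalues_le[OF U V Ad Bd] sum_exp_eigenvalues_le[OF V U Bd Ad] by simp_all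
  moreover have "0 < (\<Sum>i<n. exp (a i))" "0 < (\<Sum>i<n. exp (b i))"
    using n by (auto intro!: sum_pos)
  ultimately show ?thesis
    using abs_ln_diff_le trace_mexp_unitary_conj_real_diag_mat[OF U, of a]
      trace_mexp_unitary_conj_real_diag_mat[OF V, of b] Ad Bd by simp
qed

lemma abs_psi_diff_le:
  fixes n N :: nat and eta :: "nat list \<Rightarrow> real" and X Y :: "nat \<Rightarrow> complex mat"
  defines "H \<equiv> nc_eval n eta (\<lambda>i. (1 / of_nat N) \<cdot>\<^sub>m X i)"
    and "G \<equiv> nc_eval n eta (\<lambda>i. (1 / of_nat N) \<cdot>\<^sub>m Y i)"
  assumes H: "selfadjoint n H" and G: "selfadjoint n G" and n: "0 < n" and N: "0 < N"
  shows "\<bar>psi n N eta X - psi n N eta Y\<bar> \<le> opnorm (H - G)"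
proof -
  have minus_N: "(- of_nat N :: complex) = complex_of_real (- real N)" by simp
  have "\<bar>ln (Re (mtrace (mexp ((- of_nat N) \<cdot>\<^sub>m H)))) - ln (Re (mtrace (mexp ((- of_nat N) \<cdot>\<^sub>m G))))\<bar>
      \<le> opnorm ((- of_nat N) \<cdot>\<^sub>m H - (- of_nat N) \<cdot>\<^sub>m G)"
    unfolding minus_N
    by (rule ln_trace_mexp_lipschitz[OF selfadjoint_smult_real[OF H] selfadjoint_smult_real[OF G] n])
  also have "\<dots> \<le> real N * opnorm (H - G)"
    using opnorm_smult_diff[OF selfadjoint_carrier[OF H] selfadjoint_carrier[OF G], of "- of_nat N"]
    by simp
  finally show ?thesis
    using N unfolding psi_def H_def G_def
    by (simp add: diff_divide_distrib[symmetric] abs_minus_commute divide_le_eq mult.commute)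
qed

section \<open>Noncommutative polynomials\<close>

lemma word_prod_Nil [simp]: "word_prod n x [] = 1\<^sub>m n"
  by (simp add: word_prod_def)

lemma word_prod_Cons [simp]: "word_prod n x (i # w) = x i * word_prod n x w"
  by (simp add: word_prod_def)

lemma word_prod_carrier:
  assumes "\<forall>i\<in>set w. x i \<in> carrier_mat n n"
  shows "word_prod n x w \<in> carrier_mat n n"
  using assms by (induction w) auto

lemma opnorm_word_prod_le:
  assumes "\<forall>i\<in>set w. x i \<in> carrier_mat n n \<and> opnorm (x i) \<le> K" and K: "0 \<le> K"
  shows "opnorm (word_prod n x w) \<le> K ^ length w"
  using assms(1)
proof (induction w)
  case Nil
  then show ?case using opnorm_one_mat by simp
next
  case (Cons i w)
  then have "opnorm (word_prod n x (i # w)) \<le> opnorm (x i) * opnorm (word_prod n x w)"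
    using opnorm_mult word_prod_carrier by (metis list.set_intros(1,2) word_prod_Cons)
  also have "\<dots> \<le> K * K ^ length w"
    using Cons K opnorm_nonneg by (intro mult_mono) auto
  finally show ?case by simp
qed

lemma mult_diff_mult_mat:
  fixes X Y P Q :: "complex mat"
  assumes "X \<in> carrier_mat n n" "Y \<in> carrier_mat n n" "P \<in> carrier_mat n n" "Q \<in> carrier_mat n n"
  shows "X * P - Y * Q = X * (P - Q) + (X - Y) * Q"
  using assms by (intro eq_matI)
    (simp_all add: mult_minus_distrib_mat[of _ n n] minus_mult_distrib_mat[of _ n n]
      index_mult_mat scalar_prod_def sum_subtractf algebra_simps)

lemma opnorm_word_prod_diff_le:
  assumes "\<forall>i\<in>set w. x i \<in> carrier_mat n n \<and> y i \<in> carrier_mat n n \<and> opnorm (x i) \<le> K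
      \<and> opnorm (y i) \<le> K \<and> opnorm (x i - y i) \<le> \<delta>"
    and K: "1 \<le> K" and \<delta>: "0 \<le> \<delta>"
  shows "opnorm (word_prod n x w - word_prod n y w) \<le> real (length w) * K ^ length w * \<delta>"
  using assms(1)
proof (induction w)
  case Nil
  have "opnorm (word_prod n x [] - word_prod n y []) = opnorm (0\<^sub>m n n)"
    by (intro arg_cong[where f = opnorm] eq_matI) auto
  then show ?case using opnorm_zero_mat by simp
next
  case (Cons i w)
  let ?P = "word_prod n x w" and ?Q = "word_prod n y w"
  have xi: "x i \<in> carrier_mat n n" and yi: "y i \<in> carrier_mat n n" and "opnorm (x i) \<le> K"
    and "opnorm (x i - y i) \<le> \<delta>" using Cons.prems by auto
  have P: "?P \<in> carrier_mat n n" and Q: "?Q \<in> carrier_mat n n"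
    using Cons.prems by (auto intro: word_prod_carrier)
  have "opnorm ?Q \<le> K ^ length w" using Cons.prems K by (intro opnorm_word_prod_le) auto
  moreover have "opnorm (?P - ?Q) \<le> real (length w) * K ^ length w * \<delta>" using Cons by auto
  moreover have "opnorm (x i * ?P - y i * ?Q)
      \<le> opnorm (x i) * opnorm (?P - ?Q) + opnorm (x i - y i) * opnorm ?Q"
    unfolding mult_diff_mult_mat[OF xi yi P Q]
    by (rule order_trans[OF opnorm_add[of _ n n] add_mono])
      (use xi yi P Q in \<open>auto intro: opnorm_mult[OF xi minus_carrier_mat[OF Q]]
        opnorm_mult[OF minus_carrier_mat[OF yi] Q]\<close>)
  ultimately have "opnorm (x i * ?P - y i * ?Q)
      \<le> K * (real (length w) * K ^ length w * \<delta>) + \<delta> * K ^ length w"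
    using \<open>opnorm (x i) \<le> K\<close> \<open>opnorm (x i - y i) \<le> \<delta>\<close> K \<delta> opnorm_nonneg
    by (smt (verit, best) mult_mono)
  also have "\<dots> \<le> K * (real (length w) * K ^ length w * \<delta>) + \<delta> * K ^ Suc (length w)"
    using K \<delta> by (intro add_left_mono mult_left_mono power_increasing) auto
  also have "\<dots> = real (length (i # w)) * K ^ length (i # w) * \<delta>"
    by (simp add: algebra_simps)
  finally show ?case by simp
qed

lemma opnorm_lincomb_le:
  assumes "finite S" and "\<forall>w\<in>S. M w \<in> carrier_mat n n"
  shows "opnorm (mat n n (\<lambda>ij. \<Sum>w\<in>S. c w * M w $$ ij)) \<le> (\<Sum>w\<in>S. cmod (c w) * opnorm (M w))"
  using assms
proof (induction S rule: finite_induct)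
  case empty
  have "mat n n (\<lambda>ij. \<Sum>w\<in>{}. c w * M w $$ ij) = 0\<^sub>m n n" by (rule eq_matI) auto
  then show ?case using opnorm_zero_mat by simp
next
  case (insert w S)
  have Mw: "M w \<in> carrier_mat n n" using insert.prems by auto
  have "mat n n (\<lambda>ij. \<Sum>w\<in>insert w S. c w * M w $$ ij)
      = c w \<cdot>\<^sub>m M w + mat n n (\<lambda>ij. \<Sum>w\<in>S. c w * M w $$ ij)"
    using Mw by (intro eq_matI) (auto simp: insert.hyps)
  also have "opnorm \<dots> \<le> opnorm (c w \<cdot>\<^sub>m M w) + opnorm (mat n n (\<lambda>ij. \<Sum>w\<in>S. c w * M w $$ ij))"
    using Mw by (intro opnorm_add) auto
  also have "\<dots> \<le> cmod (c w) * opnorm (M w) + (\<Sum>w\<in>S. cmod (c w) * opnorm (M w))"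
    using insert by (intro add_mono opnorm_smult) auto
  finally show ?case using insert.hyps by simp
qed

lemma opnorm_nc_eval_diff_le:
  assumes fin: "finite {w. eta w \<noteq> 0}" and letters: "\<forall>w. eta w \<noteq> 0 \<longrightarrow> set w \<subseteq> {..<m}"
    and bounds: "\<And>i. i < m \<Longrightarrow> x i \<in> carrier_mat n n \<and> y i \<in> carrier_mat n n
      \<and> opnorm (x i) \<le> K \<and> opnorm (y i) \<le> K \<and> opnorm (x i - y i) \<le> \<delta>"
    and K: "1 \<le> K" and \<delta>: "0 \<le> \<delta>"
  shows "opnorm (nc_eval n eta x - nc_eval n eta y)
    \<le> (\<Sum>w | eta w \<noteq> 0. \<bar>eta w\<bar> * (real (length w) * K ^ length w)) * \<delta>"
proof -
  let ?S = "{w. eta w \<noteq> 0}"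
  let ?D = "\<lambda>w. word_prod n x w - word_prod n y w"
  have word_bounds: "\<forall>i\<in>set w. x i \<in> carrier_mat n n \<and> y i \<in> carrier_mat n n
      \<and> opnorm (x i) \<le> K \<and> opnorm (y i) \<le> K \<and> opnorm (x i - y i) \<le> \<delta>" if "w \<in> ?S" for w
    using letters bounds that by blast
  then have P: "word_prod n x w \<in> carrier_mat n n" "word_prod n y w \<in> carrier_mat n n" if "w \<in> ?S" for w
    using that by (auto intro!: word_prod_carrier)
  then have D: "?D w \<in> carrier_mat n n" if "w \<in> ?S" for w
    using that by (auto intro: minus_carrier_mat)
  have "nc_eval n eta x - nc_eval n eta y = mat n n (\<lambda>ij. \<Sum>w\<in>?S. complex_of_real (eta w) * ?D w $$ ij)"
  proof (rule eq_matI)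
    fix i j assume "i < dim_row (mat n n (\<lambda>ij. \<Sum>w\<in>?S. complex_of_real (eta w) * ?D w $$ ij))"
      "j < dim_col (mat n n (\<lambda>ij. \<Sum>w\<in>?S. complex_of_real (eta w) * ?D w $$ ij))"
    then have ij: "i < n" "j < n" by auto
    have "?D w $$ (i, j) = word_prod n x w $$ (i, j) - word_prod n y w $$ (i, j)" if "w \<in> ?S" for w
      using P[OF that] ij by auto
    then show "(nc_eval n eta x - nc_eval n eta y) $$ (i, j)
        = mat n n (\<lambda>ij. \<Sum>w\<in>?S. complex_of_real (eta w) * ?D w $$ ij) $$ (i, j)"
      using ij by (simp add: nc_eval_def sum_subtractf[symmetric] right_diff_distrib)
  qed (simp_all add: nc_eval_def)
  also have "opnorm \<dots> \<le> (\<Sum>w\<in>?S. \<bar>eta w\<bar> * opnorm (?D w))"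
    using opnorm_lincomb_le[OF fin, of ?D n "\<lambda>w. complex_of_real (eta w)"] D by simp
  also have "\<dots> \<le> (\<Sum>w\<in>?S. \<bar>eta w\<bar> * (real (length w) * K ^ length w * \<delta>))"
    using word_bounds K \<delta> by (intro sum_mono mult_left_mono opnorm_word_prod_diff_le) auto
  also have "\<dots> = (\<Sum>w\<in>?S. \<bar>eta w\<bar> * (real (length w) * K ^ length w)) * \<delta>"
    by (subst sum_distrib_right) (simp add: mult_ac)
  finally show ?thesis .
qed

lemma word_prod_commute:
  assumes "\<forall>i\<in>set w. x i \<in> carrier_mat n n \<and> x j * x i = x i * x j" and xj: "x j \<in> carrier_mat n n"
  shows "x j * word_prod n x w = word_prod n x w * x j"
  using assms(1)
proof (induction w)
  case (Cons i w)
  have xi: "x i \<in> carrier_mat n n" and c: "x j * x i = x i * x j" using Cons.prems by auto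
  have P: "word_prod n x w \<in> carrier_mat n n" using Cons.prems by (intro word_prod_carrier) auto
  have ih: "x j * word_prod n x w = word_prod n x w * x j" using Cons by auto
  have "x j * (x i * word_prod n x w) = (x j * x i) * word_prod n x w"
    by (simp add: assoc_mult_mat[OF xj xi P])
  also have "\<dots> = x i * (word_prod n x w * x j)"
    by (simp add: c assoc_mult_mat[OF xi xj P] ih)
  also have "\<dots> = (x i * word_prod n x w) * x j"
    by (simp add: assoc_mult_mat[OF xi P xj])
  finally show ?case by simp
qed (use xj in simp)

lemma adj_word_prod_commuting:
  assumes H: "\<forall>i\<in>I. selfadjoint n (x i)" and C: "\<forall>i\<in>I. \<forall>j\<in>I. x i * x j = x j * x i"
    and "set w \<subseteq> I"
  shows "adj (word_prod n x w) = word_prod n x w"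
  using assms(3)
proof (induction w)
  case (Cons i w)
  have xi: "x i \<in> carrier_mat n n" and "adj (x i) = x i"
    using H Cons.prems by (auto simp: selfadjoint_iff_adj)
  have xw: "\<forall>k\<in>set w. x k \<in> carrier_mat n n \<and> x i * x k = x k * x i"
    using H C Cons.prems by (auto simp: selfadjoint_iff_adj)
  then have "word_prod n x w \<in> carrier_mat n n" by (intro word_prod_carrier) auto
  then have "adj (word_prod n x (i # w)) = word_prod n x w * x i"
    using Cons adj_mult[OF xi] \<open>adj (x i) = x i\<close> by simp
  also have "\<dots> = x i * word_prod n x w"
    using word_prod_commute[OF xw xi] by simp
  finally show ?case by simp
qed simp

lemma selfadjoint_nc_eval_commuting:
  assumes W: "\<forall>w. eta w \<noteq> 0 \<longrightarrow> set w \<subseteq> I"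
    and H: "\<forall>i\<in>I. selfadjoint n (x i)" and C: "\<forall>i\<in>I. \<forall>j\<in>I. x i * x j = x j * x i"
  shows "selfadjoint n (nc_eval n eta x)"
  unfolding selfadjoint_def
proof (intro conjI allI impI)
  show "nc_eval n eta x \<in> carrier_mat n n" by (simp add: nc_eval_def)
  fix i j assume ij: "i < n" "j < n"
  have e: "word_prod n x w $$ (i, j) = cnj (word_prod n x w $$ (j, i))" if "eta w \<noteq> 0" for w
  proof -
    have "word_prod n x w \<in> carrier_mat n n"
      using H W that by (intro word_prod_carrier) (auto simp: selfadjoint_iff_adj)
    then show ?thesis
      using adj_word_prod_commuting[OF H C] W that ij index_adj[of i "word_prod n x w" j] by auto
  qed
  show "nc_eval n eta x $$ (i, j) = cnj (nc_eval n eta x $$ (j, i))"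
    using ij by (simp add: nc_eval_def e)
qed

section \<open>The translated local observables\<close>

lemma digit_less: "0 < d \<Longrightarrow> digit d c k < d"
  unfolding digit_def by simp

lemma digit_Suc: "0 < d \<Longrightarrow> digit d c (Suc k) = digit d (c div d) k"
  unfolding digit_def by (simp add: div_mult2_eq)

lemma eq_if_digits_eq:
  assumes "c < d ^ N" "c' < d ^ N" "\<forall>k<N. digit d c k = digit d c' k"
  shows "c = c'"
  using assms
proof (induction N arbitrary: c c')
  case (Suc N c c')
  have d: "0 < d" using Suc.prems(1) by (cases d) auto
  have "c div d < d ^ N" "c' div d < d ^ N"
    using Suc.prems(1,2) by (auto intro!: less_mult_imp_div_less simp: mult.commute)
  moreover have "\<forall>k<N. digit d (c div d) k = digit d (c' div d) k"
    using Suc.prems(3) d by (auto simp: digit_Suc[symmetric])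
  ultimately have "c div d = c' div d" using Suc.IH by blast
  moreover have "c mod d = c' mod d" using Suc.prems(3) by (auto simp: digit_def)
  ultimately show ?case by (metis div_mult_mod_eq)
qed simp

lemma sum_digits_less_power:
  fixes x :: "nat \<Rightarrow> nat"
  assumes "\<forall>b<R. x b < d"
  shows "(\<Sum>b<R. x b * d ^ b) < d ^ R"
  using assms
proof (induction R)
  case (Suc R)
  have "(\<Sum>b<Suc R. x b * d ^ b) < d ^ R + x R * d ^ R" using Suc by auto
  also have "\<dots> = (x R + 1) * d ^ R" by simp
  also have "\<dots> \<le> d * d ^ R" using Suc.prems by (intro mult_right_mono) auto
  finally show ?case by simp
qed simp

definition agree_outside :: "nat \<Rightarrow> nat \<Rightarrow> nat set \<Rightarrow> nat \<Rightarrow> nat \<Rightarrow> bool" where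
  "agree_outside d N S c c' \<longleftrightarrow> (\<forall>k<N. k \<notin> S \<longrightarrow> digit d c k = digit d c' k)"

lemma agree_outside_commute: "agree_outside d N S c c' \<longleftrightarrow> agree_outside d N S c' c"
  unfolding agree_outside_def by auto

text \<open>A basis state agreeing with \<open>c\<close> outside \<open>R\<close> sites is determined by its digits on
  those sites.\<close>

lemma card_agree_outside_le:
  fixes f :: "nat \<Rightarrow> nat"
  assumes d: "0 < d"
  shows "card {c' \<in> {..<d ^ N}. agree_outside d N (f ` {..<R}) c c'} \<le> d ^ R"
proof -
  let ?S = "{c' \<in> {..<d ^ N}. agree_outside d N (f ` {..<R}) c c'}"
  let ?g = "\<lambda>c'. restrict (\<lambda>b. digit d c' (f b)) {..<R}"
  have "inj_on ?g ?S"
  proof (rule inj_onI)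
    fix c1 c2 assume c1: "c1 \<in> ?S" and c2: "c2 \<in> ?S" and g: "?g c1 = ?g c2"
    have "digit d c1 k = digit d c2 k" if k: "k < N" for k
    proof (cases "k \<in> f ` {..<R}")
      case True
      then obtain b where "b < R" "k = f b" by auto
      then show ?thesis using fun_cong[OF g, of b] by simp
    qed (use c1 c2 k in \<open>auto simp: agree_outside_def\<close>)
    then show "c1 = c2" using c1 c2 eq_if_digits_eq[of c1 d N c2] by auto
  qed
  moreover have "?g ` ?S \<subseteq> PiE {..<R} (\<lambda>_. {..<d})"
    by (intro image_subsetI) (simp add: PiE_iff digit_less[OF d])
  ultimately have "card ?S \<le> card (PiE {..<R} (\<lambda>_. {..<d::nat}))"
    by (intro card_inj_on_le) (auto intro: finite_PiE)
  then show ?thesis by (simp add: card_PiE)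
qed

lemma sum_le_card_agree_outside:
  fixes f :: "nat \<Rightarrow> nat" and g :: "nat \<Rightarrow> real"
  assumes d: "0 < d" and M: "0 \<le> M"
    and g: "\<And>c'. c' < d ^ N \<Longrightarrow> g c' \<le> (if agree_outside d N (f ` {..<R}) c c' then M else 0)"
  shows "(\<Sum>c'<d ^ N. g c') \<le> real (d ^ R) * M"
proof -
  let ?P = "agree_outside d N (f ` {..<R}) c"
  have "(\<Sum>c'<d ^ N. g c') \<le> (\<Sum>c'<d ^ N. if ?P c' then M else 0)"
    using g by (intro sum_mono) auto
  also have "\<dots> = real (card {c' \<in> {..<d ^ N}. ?P c'}) * M"
    by (simp add: sum.inter_filter[symmetric])
  also have "\<dots> \<le> real (d ^ R) * M"
    using card_agree_outside_le[OF d, of N f R c] M by (intro mult_right_mono) auto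
  finally show ?thesis .
qed

definition abs_entry_sum :: "nat \<Rightarrow> complex mat \<Rightarrow> real" where
  "abs_entry_sum D A = (\<Sum>p<D. \<Sum>q<D. cmod (A $$ (p, q)))"

lemma abs_entry_sum_nonneg: "0 \<le> abs_entry_sum D A"
  unfolding abs_entry_sum_def by (intro sum_nonneg) auto

lemma cmod_index_le_abs_entry_sum:
  assumes "p < D" "q < D"
  shows "cmod (A $$ (p, q)) \<le> abs_entry_sum D A"
proof -
  have "cmod (A $$ (p, q)) \<le> (\<Sum>q<D. cmod (A $$ (p, q)))"
    using assms by (intro member_le_sum) auto
  also have "\<dots> \<le> abs_entry_sum D A"
    unfolding abs_entry_sum_def using assms
    by (intro member_le_sum[of p "{..<D}" "\<lambda>p. \<Sum>q<D. cmod (A $$ (p, q))"]) (auto intro: sum_nonneg)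
  finally show ?thesis .
qed

lemma translate_obs_carrier: "translate_obs nu d r L ob j \<in> carrier_mat (d ^ (L ^ nu)) (d ^ (L ^ nu))"
  by (simp add: translate_obs_def Let_def)

lemma cmod_translate_obs_le:
  assumes d: "0 < d" and c: "c < d ^ (L ^ nu)" and c': "c' < d ^ (L ^ nu)"
  shows "cmod (translate_obs nu d r L ob j $$ (c, c'))
    \<le> (if agree_outside d (L ^ nu) (shift nu L r j ` {..<r ^ nu}) c c'
        then abs_entry_sum (d ^ (r ^ nu)) ob else 0)"
proof -
  let ?enc = "\<lambda>e. \<Sum>b<r ^ nu. digit d e (shift nu L r j b) * d ^ b"
  have enc: "?enc e < d ^ (r ^ nu)" for e
    by (intro sum_digits_less_power) (simp add: digit_less[OF d])
  let ?P = "agree_outside d (L ^ nu) (shift nu L r j ` {..<r ^ nu}) c c'"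
  have "translate_obs nu d r L ob j $$ (c, c') = (if ?P then ob $$ (?enc c, ?enc c') else 0)"
    using c c' by (simp add: translate_obs_def Let_def agree_outside_def)
  then show ?thesis
    using cmod_index_le_abs_entry_sum[OF enc enc] abs_entry_sum_nonneg by (cases ?P) simp_all
qed

lemma opnorm_translate_obs_le:
  assumes d: "0 < d"
  shows "opnorm (translate_obs nu d r L ob j) \<le> real (d ^ (r ^ nu)) * abs_entry_sum (d ^ (r ^ nu)) ob"
proof (rule opnorm_schur_test[OF translate_obs_carrier])
  show "0 \<le> real (d ^ (r ^ nu)) * abs_entry_sum (d ^ (r ^ nu)) ob"
    by (simp add: abs_entry_sum_nonneg)
  show "(\<Sum>c'<d ^ (L ^ nu). cmod (translate_obs nu d r L ob j $$ (c, c')))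
      \<le> real (d ^ (r ^ nu)) * abs_entry_sum (d ^ (r ^ nu)) ob" if "c < d ^ (L ^ nu)" for c
    using cmod_translate_obs_le[OF d that] by (intro sum_le_card_agree_outside[OF d abs_entry_sum_nonneg])
  show "(\<Sum>c<d ^ (L ^ nu). cmod (translate_obs nu d r L ob j $$ (c, c')))
      \<le> real (d ^ (r ^ nu)) * abs_entry_sum (d ^ (r ^ nu)) ob" if "c' < d ^ (L ^ nu)" for c'
    using cmod_translate_obs_le[OF d _ that]
    by (intro sum_le_card_agree_outside[OF d abs_entry_sum_nonneg, where f = "shift nu L r j" and c = c'])
      (simp add: agree_outside_commute)
qed

lemma opnorm_Xhat_le:
  assumes d: "0 < d"
  shows "opnorm (Xhat nu d r L ob)
    \<le> real (L ^ nu) * (real (d ^ (r ^ nu)) * abs_entry_sum (d ^ (r ^ nu)) ob)"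
proof -
  have "Xhat nu d r L ob
      = mat (d ^ (L ^ nu)) (d ^ (L ^ nu)) (\<lambda>ij. \<Sum>j<L ^ nu. 1 * translate_obs nu d r L ob j $$ ij)"
    by (simp add: Xhat_def)
  also have "opnorm \<dots> \<le> (\<Sum>j<L ^ nu. cmod 1 * opnorm (translate_obs nu d r L ob j))"
    by (intro opnorm_lincomb_le) (auto simp: translate_obs_carrier)
  also have "\<dots> \<le> (\<Sum>j<L ^ nu. real (d ^ (r ^ nu)) * abs_entry_sum (d ^ (r ^ nu)) ob)"
    using opnorm_translate_obs_le[OF d] by (intro sum_mono) simp
  finally show ?thesis by simp
qed

section \<open>Equality of the limits\<close>

lemma nc_eval_diff_tendsto_0:
  fixes x y :: "nat \<Rightarrow> nat \<Rightarrow> complex mat" and n :: "nat \<Rightarrow> nat"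
  assumes fin: "finite {w. eta w \<noteq> 0}" and letters: "\<forall>w. eta w \<noteq> 0 \<longrightarrow> set w \<subseteq> {..<m}"
    and carrier: "\<And>L i. i < m \<Longrightarrow> x L i \<in> carrier_mat (n L) (n L) \<and> y L i \<in> carrier_mat (n L) (n L)"
    and bounded: "\<And>i. i < m \<Longrightarrow> \<forall>\<^sub>F L in sequentially. opnorm (x L i) \<le> K i"
    and close: "\<And>i. i < m \<Longrightarrow> (\<lambda>L. opnorm (x L i - y L i)) \<longlonglongrightarrow> 0"
  shows "(\<lambda>L. opnorm (nc_eval (n L) eta (x L) - nc_eval (n L) eta (y L))) \<longlonglongrightarrow> 0"
proof -
  define \<delta> where "\<delta> L = (\<Sum>i<m. opnorm (x L i - y L i))" for L
  define K' where "K' = (\<Sum>i<m. \<bar>K i\<bar>) + 1"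
  define C where "C = (\<Sum>w | eta w \<noteq> 0. \<bar>eta w\<bar> * (real (length w) * K' ^ length w))"
  have \<delta>: "\<delta> \<longlonglongrightarrow> 0" unfolding \<delta>_def by (intro tendsto_null_sum close) simp
  have diff_le_\<delta>: "opnorm (x L i - y L i) \<le> \<delta> L" if "i < m" for L i
    unfolding \<delta>_def using that opnorm_nonneg by (intro member_le_sum) auto
  have K_le: "K i + 1 \<le> K'" if "i < m" for i
    unfolding K'_def using member_le_sum[of i "{..<m}" "\<lambda>i. \<bar>K i\<bar>"] that by auto
  have "\<forall>\<^sub>F L in sequentially. \<forall>i\<in>{..<m}. opnorm (x L i) \<le> K i"
    using bounded by (intro eventually_ball_finite) auto
  moreover have "\<forall>\<^sub>F L in sequentially. \<delta> L < 1"
    using \<delta> by (rule order_tendstoD(2)) simp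
  ultimately have "\<forall>\<^sub>F L in sequentially.
      opnorm (nc_eval (n L) eta (x L) - nc_eval (n L) eta (y L)) \<le> C * \<delta> L"
  proof eventually_elim
    case (elim L)
    have "opnorm (x L i) \<le> K'" "opnorm (y L i) \<le> K'" if i: "i < m" for i
    proof -
      have "opnorm (x L i) \<le> K i" using elim i by blast
      moreover have "opnorm (y L i) \<le> opnorm (x L i) + opnorm (x L i - y L i)"
        using carrier[OF i, of L] by (intro opnorm_le_opnorm_plus_diff) auto
      ultimately show "opnorm (x L i) \<le> K'" "opnorm (y L i) \<le> K'"
        using elim diff_le_\<delta>[OF i, of L] K_le[OF i] by linarith+
    qed
    then show ?case
      unfolding C_def using carrier diff_le_\<delta>
      by (intro opnorm_nc_eval_diff_le[OF fin letters])
        (auto simp: K'_def \<delta>_def sum_nonneg opnorm_nonneg)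
  qed
  then have "\<forall>\<^sub>F L in sequentially.
      norm (opnorm (nc_eval (n L) eta (x L) - nc_eval (n L) eta (y L))) \<le> C * \<delta> L"
    by (simp add: opnorm_nonneg)
  moreover have "(\<lambda>L. C * \<delta> L) \<longlonglongrightarrow> 0" using tendsto_mult_right_zero[OF \<delta>] .
  ultimately show ?thesis by (rule Lim_null_comparison)
qed

lemma selfadjoint_nc_eval_scaled_commuting:
  assumes letters: "\<forall>w. eta w \<noteq> 0 \<longrightarrow> set w \<subseteq> {..<m}"
    and sa: "\<forall>i<m. selfadjoint n (X i)" and comm: "\<forall>i<m. \<forall>j<m. X i * X j = X j * X i"
  shows "selfadjoint n (nc_eval n eta (\<lambda>i. (1 / of_nat N) \<cdot>\<^sub>m X i))"
proof (rule selfadjoint_nc_eval_commuting[OF letters])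
  have c: "(1 / of_nat N :: complex) = complex_of_real (1 / real N)" by simp
  show "\<forall>i\<in>{..<m}. selfadjoint n ((1 / of_nat N) \<cdot>\<^sub>m X i)"
    unfolding c using sa selfadjoint_smult_real by blast
  have "(c \<cdot>\<^sub>m X i) * (c \<cdot>\<^sub>m X j) = (c \<cdot>\<^sub>m X j) * (c \<cdot>\<^sub>m X i)" if "i < m" "j < m" for i j c
  proof -
    have Xi: "X i \<in> carrier_mat n n" and Xj: "X j \<in> carrier_mat n n"
      using sa that selfadjoint_carrier by blast+
    show ?thesis
      using comm that
      by (simp add: mult_smult_assoc_mat[OF Xi smult_carrier_mat[OF Xj]] mult_smult_distrib[OF Xi Xj]
          mult_smult_assoc_mat[OF Xj smult_carrier_mat[OF Xi]] mult_smult_distrib[OF Xj Xi])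
  qed
  then show "\<forall>i\<in>{..<m}. \<forall>j\<in>{..<m}. ((1 / of_nat N) \<cdot>\<^sub>m X i) * ((1 / of_nat N) \<cdot>\<^sub>m X j)
      = ((1 / of_nat N) \<cdot>\<^sub>m X j) * ((1 / of_nat N) \<cdot>\<^sub>m X i)"
    by blast
qed

lemma opnorm_scaled_diff_le:
  assumes "A \<in> carrier_mat n k" "B \<in> carrier_mat n k" "1 \<le> N"
  shows "opnorm ((1 / of_nat N) \<cdot>\<^sub>m A - (1 / of_nat N) \<cdot>\<^sub>m B) \<le> opnorm (A - B)"
proof -
  have "cmod (1 / of_nat N :: complex) \<le> 1" using assms(3) by (simp add: norm_divide)
  then show ?thesis
    using opnorm_smult_diff[OF assms(1,2), of "1 / of_nat N"] opnorm_nonneg[of "A - B"]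
    by (meson mult_left_le_one_le norm_ge_zero order_trans)
qed

lemma opnorm_scaled_Xhat_le:
  assumes "0 < d" "1 \<le> L"
  shows "opnorm ((1 / of_nat (L ^ nu)) \<cdot>\<^sub>m Xhat nu d r L ob)
    \<le> real (d ^ (r ^ nu)) * abs_entry_sum (d ^ (r ^ nu)) ob"
proof -
  have "opnorm ((1 / of_nat (L ^ nu)) \<cdot>\<^sub>m Xhat nu d r L ob)
      \<le> cmod (1 / of_nat (L ^ nu)) * opnorm (Xhat nu d r L ob)"
    by (rule opnorm_smult)
  also have "\<dots>
      \<le> (1 / real (L ^ nu)) * (real (L ^ nu) * (real (d ^ (r ^ nu)) * abs_entry_sum (d ^ (r ^ nu)) ob))"
    using opnorm_Xhat_le[OF assms(1), of nu r L ob]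
    by (intro mult_mono) (auto simp: norm_divide norm_power opnorm_nonneg)
  finally show ?thesis using assms(2) by simp
qed

lemma nc_eval_scaled_Xhat_diff_tendsto_0:
  assumes d: "0 < d" and fin: "finite {w. eta w \<noteq> 0}" and letters: "\<forall>w. eta w \<noteq> 0 \<longrightarrow> set w \<subseteq> {..<m}"
    and Xc: "\<And>L i. i < m \<Longrightarrow> Xc L i \<in> carrier_mat (d ^ (L ^ nu)) (d ^ (L ^ nu))"
    and close: "\<And>i. i < m \<Longrightarrow> (\<lambda>L. opnorm (Xhat nu d r L (ob i) - Xc L i)) \<longlonglongrightarrow> 0"
  shows "(\<lambda>L. opnorm (nc_eval (d ^ (L ^ nu)) eta (\<lambda>i. (1 / of_nat (L ^ nu)) \<cdot>\<^sub>m Xhat nu d r L (ob i))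
      - nc_eval (d ^ (L ^ nu)) eta (\<lambda>i. (1 / of_nat (L ^ nu)) \<cdot>\<^sub>m Xc L i))) \<longlonglongrightarrow> 0"
proof (rule nc_eval_diff_tendsto_0[OF fin letters])
  have Xhat: "Xhat nu d r L (ob i) \<in> carrier_mat (d ^ (L ^ nu)) (d ^ (L ^ nu))" for L i
    by (simp add: Xhat_def)
  show "(1 / of_nat (L ^ nu)) \<cdot>\<^sub>m Xhat nu d r L (ob i) \<in> carrier_mat (d ^ (L ^ nu)) (d ^ (L ^ nu))
      \<and> (1 / of_nat (L ^ nu)) \<cdot>\<^sub>m Xc L i \<in> carrier_mat (d ^ (L ^ nu)) (d ^ (L ^ nu))" if "i < m" for L i
    using Xhat Xc[OF that] by simp
  show "\<forall>\<^sub>F L in sequentially. opnorm ((1 / of_nat (L ^ nu)) \<cdot>\<^sub>m Xhat nu d r L (ob i))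
      \<le> real (d ^ (r ^ nu)) * abs_entry_sum (d ^ (r ^ nu)) (ob i)" for i
    using eventually_ge_at_top[of 1] by eventually_elim (rule opnorm_scaled_Xhat_le[OF d])
  show "(\<lambda>L. opnorm ((1 / of_nat (L ^ nu)) \<cdot>\<^sub>m Xhat nu d r L (ob i) - (1 / of_nat (L ^ nu)) \<cdot>\<^sub>m Xc L i))
      \<longlonglongrightarrow> 0" if i: "i < m" for i
  proof (rule Lim_null_comparison[OF _ close[OF i]])
    show "\<forall>\<^sub>F L in sequentially. norm (opnorm ((1 / of_nat (L ^ nu)) \<cdot>\<^sub>m Xhat nu d r L (ob i)
        - (1 / of_nat (L ^ nu)) \<cdot>\<^sub>m Xc L i)) \<le> opnorm (Xhat nu d r L (ob i) - Xc L i)"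
      using eventually_ge_at_top[of 1]
    proof eventually_elim
      case (elim L)
      then have "1 \<le> L ^ nu" by simp
      from opnorm_scaled_diff_le[OF Xhat Xc[OF i] this] show ?case by (simp add: opnorm_nonneg)
    qed
  qed
qed

lemma lim_eq_if_diff_tendsto_0:
  fixes f g :: "nat \<Rightarrow> real"
  assumes "convergent g" and "(\<lambda>n. f n - g n) \<longlonglongrightarrow> 0"
  shows "lim f = lim g"
proof -
  have "g \<longlonglongrightarrow> lim g" using assms(1) by (simp add: convergent_LIMSEQ_iff)
  then have "f \<longlonglongrightarrow> lim g" using assms(2) by (rule Lim_transform)
  then show ?thesis by (rule limI)
qed

theorem theorem1:
  fixes nu d r m :: nat
    and ob :: "nat \<Rightarrow> complex mat"
    and Xc :: "nat \<Rightarrow> nat \<Rightarrow> complex mat"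
    and eta :: "nat list \<Rightarrow> real"
  assumes "nu \<ge> 1" and "d \<ge> 1" and "r \<ge> 1"
    and "\<forall>i<m. selfadjoint (d ^ (r ^ nu)) (ob i)"
    and "\<forall>L. \<forall>i<m. selfadjoint (d ^ (L ^ nu)) (Xc L i)"
    and "\<forall>i<m. (\<lambda>L. opnorm (Xhat nu d r L (ob i) - Xc L i)) \<longlonglongrightarrow> 0"
    and "\<forall>L. \<forall>i<m. \<forall>j<m. Xc L i * Xc L j = Xc L j * Xc L i"
    and "finite {w. eta w \<noteq> 0}"
    and "\<forall>w. eta w \<noteq> 0 \<longrightarrow> set w \<subseteq> {..<m}"
    and "\<forall>L\<ge>r. selfadjoint (d ^ (L ^ nu))
            (nc_eval (d ^ (L ^ nu)) eta (\<lambda>i. (1 / of_nat (L ^ nu)) \<cdot>\<^sub>m Xhat nu d r L (ob i)))"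
    and "convergent (\<lambda>L. psi (d ^ (L ^ nu)) (L ^ nu) eta (\<lambda>i. Xhat nu d r L (ob i)))"
    and "convergent (\<lambda>L. psi (d ^ (L ^ nu)) (L ^ nu) eta (Xc L))"
  shows "lim (\<lambda>L. psi (d ^ (L ^ nu)) (L ^ nu) eta (\<lambda>i. Xhat nu d r L (ob i)))
       = lim (\<lambda>L. psi (d ^ (L ^ nu)) (L ^ nu) eta (Xc L))"
proof (rule lim_eq_if_diff_tendsto_0[OF assms(12)])
  let ?xh = "\<lambda>L i. (1 / of_nat (L ^ nu)) \<cdot>\<^sub>m Xhat nu d r L (ob i)"
  let ?xc = "\<lambda>L i. (1 / of_nat (L ^ nu)) \<cdot>\<^sub>m Xc L i"
  have d: "0 < d" using assms(2) by simp
  have "\<forall>\<^sub>F L in sequentially. norm (psi (d ^ (L ^ nu)) (L ^ nu) eta (\<lambda>i. Xhat nu d r L (ob i))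
      - psi (d ^ (L ^ nu)) (L ^ nu) eta (Xc L))
    \<le> opnorm (nc_eval (d ^ (L ^ nu)) eta (?xh L) - nc_eval (d ^ (L ^ nu)) eta (?xc L))"
    using eventually_ge_at_top[of r]
  proof eventually_elim
    case (elim L)
    have "selfadjoint (d ^ (L ^ nu)) (nc_eval (d ^ (L ^ nu)) eta (?xc L))"
      using assms(5,7) by (intro selfadjoint_nc_eval_scaled_commuting[OF assms(9)]) blast+
    moreover have "0 < d ^ (L ^ nu)" "0 < L ^ nu" using d elim assms(3) by simp_all
    ultimately show ?case
      unfolding real_norm_def using assms(10) elim by (intro abs_psi_diff_le) auto
  qed
  moreover have "(\<lambda>L. opnorm (nc_eval (d ^ (L ^ nu)) eta (?xh L) - nc_eval (d ^ (L ^ nu)) eta (?xc L)))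
      \<longlonglongrightarrow> 0"
    using assms(5,6) selfadjoint_carrier
    by (intro nc_eval_scaled_Xhat_diff_tendsto_0[OF d assms(8,9)]) blast+
  ultimately show "(\<lambda>L. psi (d ^ (L ^ nu)) (L ^ nu) eta (\<lambda>i. Xhat nu d r L (ob i))
      - psi (d ^ (L ^ nu)) (L ^ nu) eta (Xc L)) \<longlonglongrightarrow> 0"
    by (rule Lim_null_comparison)
qed

end
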